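(* Let $H,U$ be separable complex Hilbert spaces, $T>0$, $A$ the generator of a $C_0$-semigroup $e^{tA}$ on $H$ with $\|e^{tA}\|\le Ce^{\omega t}$, $K\in L^2(0,T;\mathbb R)$, $B\in\mathcal L(U,H)$. Let $\tau\in(0,T)$, $X_0=(\xi_0,\xi(\cdot))\in H\times L^2(0,\tau;H)$ and $u\in L^2(\tau,T;U)$. Then there is a unique mild solution $w$ of $w'(t)=Aw(t)+\int_\tau^tK(t-s)w(s)ds+\int_0^\tau K(t-s)\xi(s)ds+Bu(t)$, $t\in(\tau,T)$, $w(\tau)=\xi_0$, and it is given by $$w(t)=F(t,\tau)\xi_0+\int_0^\tau M(t,\sigma,\tau)\xi(\sigma)\,d\sigma+\int_\tau^tF(t,s)Bu(s)\,ds,\qquad t\in[\tau,T],$$ where $F(t,\tau)=e^{(t-\tau)A}-\int_\tau^tR(t-s)e^{(s-\tau)A}ds$, $M(t,\sigma,\tau)=G(t,\sigma,\tau)-\int_\tau^tR(t-s)G(s,\sigma,\tau)ds$, $G(t,\sigma,\tau)=\mu(t-\sigma)-e^{(t-\tau)A}\mu(\tau-\sigma)$ ($\sigma\le\tau\le t$), $\mu(t)=\int_0^te^{(t-s)A}K(s)ds$, and $R$ is the unique solution of the Volterra equation $R(t)-\int_0^t\mu(t-s)R(s)ds=-\mu(t)$, $t>0$, explicitly given by $R(t)=-\mu(t)-\int_0^t\mu(t-s)\mu(s)ds-\int_0^t\mu(t-\sigma)\int_0^\sigma\mu(\sigma-s)\mu(s)\,ds\,d\sigma-\cdots$.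
   Context: A mild solution is a function $w\in L^2(\tau,T;H)$ satisfying a.e. on $[\tau,T]$: $w(t)=e^{(t-\tau)A}\xi_0+\int_\tau^te^{(t-s)A}\int_\tau^sK(s-\sigma)w(\sigma)d\sigma ds+\int_\tau^te^{(t-s)A}\int_0^\tau K(s-\sigma)\xi(\sigma)d\sigma ds+\int_\tau^te^{(t-s)A}Bu(s)ds$. *)

theory Defs
  imports "HOL-Analysis.Analysis"
begin

definition L2_on :: "real set \<Rightarrow> (real \<Rightarrow> 'a::{banach,second_countable_topology}) \<Rightarrow> bool" where
  "L2_on I f \<longleftrightarrow> set_borel_measurable lborel I f \<and>
     set_integrable lborel I (\<lambda>t. (norm (f t))^2)"

definition C0_semigroup :: "(real \<Rightarrow> 'h::real_normed_vector \<Rightarrow> 'h) \<Rightarrow> bool" where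
  "C0_semigroup S \<longleftrightarrow>
     (\<forall>t\<ge>0. bounded_linear (S t)) \<and>
     S 0 = id \<and>
     (\<forall>s t. s \<ge> 0 \<longrightarrow> t \<ge> 0 \<longrightarrow> S (s + t) = S s \<circ> S t) \<and>
     (\<forall>x. ((\<lambda>t. S t x) \<longlongrightarrow> x) (at_right 0))"

definition is_generator :: "(real \<Rightarrow> 'h::real_normed_vector \<Rightarrow> 'h) \<Rightarrow> 'h set \<Rightarrow> ('h \<Rightarrow> 'h) \<Rightarrow> bool" where
  "is_generator S D A \<longleftrightarrow>
     D = {x. \<exists>y. ((\<lambda>h. (S h x - x) /\<^sub>R h) \<longlongrightarrow> y) (at_right 0)} \<and>
     (\<forall>x\<in>D. ((\<lambda>h. (S h x - x) /\<^sub>R h) \<longlongrightarrow> A x) (at_right 0))"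

definition mu :: "(real \<Rightarrow> 'h::{banach,second_countable_topology} \<Rightarrow> 'h) \<Rightarrow> (real \<Rightarrow> real) \<Rightarrow> real \<Rightarrow> 'h \<Rightarrow> 'h" where
  "mu S K t x = set_lebesgue_integral lborel {0..t} (\<lambda>s. K s *\<^sub>R S (t - s) x)"

definition conv :: "(real \<Rightarrow> 'h::{banach,second_countable_topology} \<Rightarrow> 'h) \<Rightarrow> (real \<Rightarrow> 'h \<Rightarrow> 'h) \<Rightarrow> real \<Rightarrow> 'h \<Rightarrow> 'h" where
  "conv P Q t x = set_lebesgue_integral lborel {0..t} (\<lambda>s. P (t - s) (Q s x))"

fun mu_pow :: "(real \<Rightarrow> 'h::{banach,second_countable_topology} \<Rightarrow> 'h) \<Rightarrow> (real \<Rightarrow> real) \<Rightarrow> nat \<Rightarrow> real \<Rightarrow> 'h \<Rightarrow> 'h" where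
  "mu_pow S K 0 = mu S K"
| "mu_pow S K (Suc n) = conv (mu S K) (mu_pow S K n)"

definition Rres :: "(real \<Rightarrow> 'h::{banach,second_countable_topology} \<Rightarrow> 'h) \<Rightarrow> (real \<Rightarrow> real) \<Rightarrow> real \<Rightarrow> 'h \<Rightarrow> 'h" where
  "Rres S K t x = - (\<Sum>n. mu_pow S K n t x)"

definition volterra_sol :: "(real \<Rightarrow> 'h::{banach,second_countable_topology} \<Rightarrow> 'h) \<Rightarrow> (real \<Rightarrow> real) \<Rightarrow> real \<Rightarrow> (real \<Rightarrow> 'h \<Rightarrow> 'h) \<Rightarrow> bool" where
  "volterra_sol S K T R \<longleftrightarrow>
     (\<forall>t\<in>{0..T}. bounded_linear (R t)) \<and>
     (\<forall>x. continuous_on {0..T} (\<lambda>t. R t x)) \<and>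
     (\<forall>t\<in>{0<..T}. \<forall>x. R t x - conv (mu S K) R t x = - mu S K t x)"

definition Fop :: "(real \<Rightarrow> 'h::{banach,second_countable_topology} \<Rightarrow> 'h) \<Rightarrow> (real \<Rightarrow> 'h \<Rightarrow> 'h) \<Rightarrow> real \<Rightarrow> real \<Rightarrow> 'h \<Rightarrow> 'h" where
  "Fop S R t \<tau> x = S (t - \<tau>) x - set_lebesgue_integral lborel {\<tau>..t} (\<lambda>s. R (t - s) (S (s - \<tau>) x))"

definition Gop :: "(real \<Rightarrow> 'h::{banach,second_countable_topology} \<Rightarrow> 'h) \<Rightarrow> (real \<Rightarrow> real) \<Rightarrow> real \<Rightarrow> real \<Rightarrow> real \<Rightarrow> 'h \<Rightarrow> 'h" where
  "Gop S K t \<sigma> \<tau> x = mu S K (t - \<sigma>) x - S (t - \<tau>) (mu S K (\<tau> - \<sigma>) x)"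

definition Mop :: "(real \<Rightarrow> 'h::{banach,second_countable_topology} \<Rightarrow> 'h) \<Rightarrow> (real \<Rightarrow> real) \<Rightarrow> (real \<Rightarrow> 'h \<Rightarrow> 'h) \<Rightarrow> real \<Rightarrow> real \<Rightarrow> real \<Rightarrow> 'h \<Rightarrow> 'h" where
  "Mop S K R t \<sigma> \<tau> x = Gop S K t \<sigma> \<tau> x -
     set_lebesgue_integral lborel {\<tau>..t} (\<lambda>s. R (t - s) (Gop S K s \<sigma> \<tau> x))"

definition sol_formula :: "(real \<Rightarrow> 'h::{banach,second_countable_topology} \<Rightarrow> 'h) \<Rightarrow> (real \<Rightarrow> real) \<Rightarrow> (real \<Rightarrow> 'h \<Rightarrow> 'h)
    \<Rightarrow> ('u::{banach,second_countable_topology} \<Rightarrow> 'h) \<Rightarrow> real \<Rightarrow> 'h \<Rightarrow> (real \<Rightarrow> 'h) \<Rightarrow> (real \<Rightarrow> 'u) \<Rightarrow> real \<Rightarrow> 'h" where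
  "sol_formula S K R B \<tau> \<xi>0 \<xi> u t =
     Fop S R t \<tau> \<xi>0
     + set_lebesgue_integral lborel {0..\<tau>} (\<lambda>\<sigma>. Mop S K R t \<sigma> \<tau> (\<xi> \<sigma>))
     + set_lebesgue_integral lborel {\<tau>..t} (\<lambda>s. Fop S R t s (B (u s)))"

definition mild_solution :: "(real \<Rightarrow> 'h::{banach,second_countable_topology} \<Rightarrow> 'h) \<Rightarrow> (real \<Rightarrow> real)
    \<Rightarrow> ('u::{banach,second_countable_topology} \<Rightarrow> 'h) \<Rightarrow> real \<Rightarrow> real \<Rightarrow> 'h \<Rightarrow> (real \<Rightarrow> 'h) \<Rightarrow> (real \<Rightarrow> 'u) \<Rightarrow> (real \<Rightarrow> 'h) \<Rightarrow> bool" where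
  "mild_solution S K B \<tau> T \<xi>0 \<xi> u w \<longleftrightarrow>
     L2_on {\<tau>..T} w \<and>
     (AE t in lborel. t \<in> {\<tau>..T} \<longrightarrow>
        w t = S (t - \<tau>) \<xi>0
          + set_lebesgue_integral lborel {\<tau>..t}
              (\<lambda>s. S (t - s) (set_lebesgue_integral lborel {\<tau>..s} (\<lambda>\<sigma>. K (s - \<sigma>) *\<^sub>R w \<sigma>)))
          + set_lebesgue_integral lborel {\<tau>..t}
              (\<lambda>s. S (t - s) (set_lebesgue_integral lborel {0..\<tau>} (\<lambda>\<sigma>. K (s - \<sigma>) *\<^sub>R \<xi> \<sigma>)))
          + set_lebesgue_integral lborel {\<tau>..t} (\<lambda>s. S (t - s) (B (u s))))"

end

theory Submission
  imports Defs
begin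

(* The resolvent is the Neumann series R = -(mu + mu*mu + mu*(mu*mu) + ...): on [0,T] the n-th
   convolution power of mu is bounded by c^(n+1) T^n / n!, so the series converges uniformly and
   may be convolved with mu term by term, which gives the Volterra equation; any other continuous
   solution differs from R by some D with |D t| <= c * int_0^t |D|, and iterating this
   Gronwall-type inequality forces D = 0.

   For the control problem let f(s) = int_0^tau K(s-sigma) xi(sigma) dsigma be the forcing by the
   history, and let g(t) = e^{(t-tau)A} xi0 + int_tau^t e^{(t-s)A} (f(s) + B u(s)) ds be the mild
   solution of the problem without memory. Fubini's theorem together with the identity
   int_tau^s K(r-sigma) e^{(s-r)A} dr = G(s,sigma,tau) shows that the solution formula is
   w = g - R*g, and the Volterra equation for R turns the memory term of g - R*g into -R*g,
   so w is a mild solution. The difference v of two mild solutions satisfies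
   |v t| <= C int_tau^t int_tau^s |K(s-sigma)| |v sigma| dsigma ds, and the same Gronwall iteration,
   now almost everywhere, gives v = 0. *)

section \<open>Integration on the real line\<close>

lemma norm_integral_le_integral:
  fixes f :: "'a \<Rightarrow> 'b::{banach,second_countable_topology}"
  assumes g: "integrable M g" and b: "AE x in M. norm (f x) \<le> g x"
  shows "norm (integral\<^sup>L M f) \<le> integral\<^sup>L M g"
proof (cases "integrable M f")
  case True
  have "norm (integral\<^sup>L M f) \<le> integral\<^sup>L M (\<lambda>x. norm (f x))" by (rule integral_norm_bound)
  also have "\<dots> \<le> integral\<^sup>L M g"
    by (rule integral_mono_AE) (use True g b in auto)
  finally show ?thesis .
next
  case False
  have "0 \<le> integral\<^sup>L M g"
    by (rule integral_nonneg_AE) (use b in \<open>auto elim: AE_mp intro: order_trans[OF norm_ge_zero]\<close>)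
  then show ?thesis using False by (simp add: not_integrable_integral_eq)
qed

lemma lborel_integral_shift:
  fixes F :: "real \<Rightarrow> 'a::{banach,second_countable_topology}"
  shows "(\<integral>q. F q \<partial>lborel) = (\<integral>r. F (r - a) \<partial>lborel)"
  using lborel_integral_real_affine[of 1 F "-a"] by simp

lemma lborel_integral_reflect:
  fixes F :: "real \<Rightarrow> 'a::{banach,second_countable_topology}"
  shows "(\<integral>q. F q \<partial>lborel) = (\<integral>r. F (b - r) \<partial>lborel)"
  using lborel_integral_real_affine[of "-1" F b] by simp

lemma lborel_integrable_shift:
  fixes F :: "real \<Rightarrow> 'a::{banach,second_countable_topology}"
  assumes "integrable lborel F"
  shows "integrable lborel (\<lambda>r. F (r - a))" "integrable lborel (\<lambda>r. F (a - r))"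
  using lborel_integrable_real_affine[OF assms, of 1 "-a"] lborel_integrable_real_affine[OF assms, of "-1" a]
  by simp_all

lemma integrable_indicator_Icc_const:
  "integrable lborel (\<lambda>s::real. indicator {a..b} s * (c::real))"
  by (rule integrable_mult_left, rule integrable_real_indicator) (auto simp: emeasure_lborel_Icc_eq)

lemma integrable_indicator_Icc_continuous:
  fixes f :: "real \<Rightarrow> real"
  assumes "continuous_on {a..b} f"
  shows "integrable lborel (\<lambda>s. indicator {a..b} s * f s)"
  using borel_integrable_atLeastAtMost'[OF assms] by (simp add: set_integrable_def)

lemma integral_Icc_power:
  assumes "a \<le> b"
  shows "(\<integral>s. indicator {a..b} s * (c * (s - a)^n) \<partial>lborel) = c * (b - a)^Suc n / Suc n"
proof -
  have "(LBINT s. (s - a)^n * indicator {a..b} s) = (b - a)^Suc n / Suc n - (a - a)^Suc n / Suc n"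
    apply (rule integral_FTC_Icc_real[OF assms])
     apply (auto intro!: derivative_eq_intros continuous_intros simp del: of_nat_Suc)
    apply (cases n) apply (simp_all add: field_simps)
    done
  moreover have "(\<lambda>s. indicator {a..b} s * (c * (s - a)^n)) = (\<lambda>s. c * ((s - a)^n * indicator {a..b} s))"
    by (simp add: fun_eq_iff ac_simps)
  ultimately show ?thesis by simp
qed

lemma integral_Icc_split:
  fixes f :: "real \<Rightarrow> 'a::{banach,second_countable_topology}"
  assumes "a \<le> b" "b \<le> c" and f: "integrable lborel (\<lambda>r. indicator {a..c} r *\<^sub>R f r)"
  shows "(\<integral>r. indicator {a..c} r *\<^sub>R f r \<partial>lborel)
       = (\<integral>r. indicator {a..b} r *\<^sub>R f r \<partial>lborel) + (\<integral>r. indicator {b..c} r *\<^sub>R f r \<partial>lborel)"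
proof -
  have sub: "integrable lborel (\<lambda>r. indicator {d..e} r *\<^sub>R f r)" if "a \<le> d" "e \<le> c" for d e
  proof -
    have "(\<lambda>r. indicator {d..e} r *\<^sub>R (indicator {a..c} r *\<^sub>R f r)) = (\<lambda>r. indicator {d..e} r *\<^sub>R f r)"
      using that by (auto simp: fun_eq_iff indicator_def)
    with integrable_mult_indicator[OF _ f, of "{d..e}"] show ?thesis by simp
  qed
  have "(\<integral>r. indicator {a..c} r *\<^sub>R f r \<partial>lborel) = (\<integral>r. indicator {a..b} r *\<^sub>R f r + indicator {b..c} r *\<^sub>R f r \<partial>lborel)"
    by (rule integral_cong_AE) (use sub assms AE_lborel_singleton[of b] in \<open>auto simp: indicator_def\<close>)
  also have "\<dots> = (\<integral>r. indicator {a..b} r *\<^sub>R f r \<partial>lborel) + (\<integral>r. indicator {b..c} r *\<^sub>R f r \<partial>lborel)"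
    by (rule Bochner_Integration.integral_add) (use sub assms in auto)
  finally show ?thesis .
qed

lemma tendsto_indicator_Icc:
  fixes u :: "nat \<Rightarrow> real"
  assumes u: "u \<longlonglongrightarrow> a0" and s: "s \<noteq> a0"
  shows "(\<lambda>n. indicator {a..u n} s :: real) \<longlonglongrightarrow> indicator {a..a0} s"
proof (cases "s < a0")
  case True
  have "eventually (\<lambda>n. u n > s) sequentially" using order_tendstoD(1)[OF u True] .
  hence "eventually (\<lambda>n. indicator {a..u n} s = (indicator {a..a0} s :: real)) sequentially"
    by eventually_elim (use True in \<open>auto simp: indicator_def\<close>)
  thus ?thesis by (rule tendsto_eventually)
next
  case False
  hence F: "s > a0" using s by auto
  have "eventually (\<lambda>n. u n < s) sequentially" using order_tendstoD(2)[OF u F] .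
  hence "eventually (\<lambda>n. indicator {a..u n} s = (indicator {a..a0} s :: real)) sequentially"
    by eventually_elim (use F in \<open>auto simp: indicator_def\<close>)
  thus ?thesis by (rule tendsto_eventually)
qed

lemma continuous_on_parametric_integral:
  fixes H :: "real \<Rightarrow> real \<Rightarrow> 'a::{banach,second_countable_topology}"
  assumes k: "integrable lborel k"
  and Hm: "\<And>t. t \<in> I \<Longrightarrow> H t \<in> borel_measurable lborel"
  and Hc: "\<And>s. continuous_on I (\<lambda>t. H t s)"
  and Hb: "\<And>t s. t \<in> I \<Longrightarrow> norm (H t s) \<le> Bd"
  shows "continuous_on I (\<lambda>t. \<integral>s. (indicator {a..t} s * k s) *\<^sub>R H t s \<partial>lborel)"
proof (rule continuous_on_sequentiallyI)
  fix u t0 assume u: "\<forall>n. u n \<in> I" "t0 \<in> I" "u \<longlonglongrightarrow> t0"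
  have km[measurable]: "k \<in> borel_measurable lborel" using k by auto
  have Hm0[measurable]: "H t0 \<in> borel_measurable lborel" using Hm u by auto
  have Hmn[measurable]: "H (u n) \<in> borel_measurable lborel" for n using Hm u by auto
  show "(\<lambda>n. \<integral>s. (indicator {a..u n} s * k s) *\<^sub>R H (u n) s \<partial>lborel) \<longlonglongrightarrow>
        (\<integral>s. (indicator {a..t0} s * k s) *\<^sub>R H t0 s \<partial>lborel)"
  proof (rule integral_dominated_convergence[where w="\<lambda>s. \<bar>k s\<bar> * Bd"])
    show "integrable lborel (\<lambda>s. \<bar>k s\<bar> * Bd)" using k by auto
    show "(\<lambda>s. (indicator {a..t0} s * k s) *\<^sub>R H t0 s) \<in> borel_measurable lborel" by measurable
    show "(\<lambda>s. (indicator {a..u n} s * k s) *\<^sub>R H (u n) s) \<in> borel_measurable lborel" for n by measurable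
    show "AE s in lborel. (\<lambda>n. (indicator {a..u n} s * k s) *\<^sub>R H (u n) s) \<longlonglongrightarrow> (indicator {a..t0} s * k s) *\<^sub>R H t0 s"
      using AE_lborel_singleton[of t0]
    proof eventually_elim
      case (elim s)
      have "(\<lambda>n. H (u n) s) \<longlonglongrightarrow> H t0 s"
        using Hc[of s] u unfolding continuous_on_sequentially comp_def by auto
      then show ?case
        by (intro tendsto_scaleR tendsto_mult tendsto_indicator_Icc[OF u(3) elim] tendsto_const)
    qed
    show "AE s in lborel. norm ((indicator {a..u n} s * k s) *\<^sub>R H (u n) s) \<le> \<bar>k s\<bar> * Bd" for n
    proof (rule AE_I2)
      fix s
      have "norm (H (u n) s) \<le> Bd" using Hb u by auto
      hence "0 \<le> Bd" using norm_ge_zero order_trans by blast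
      have "norm ((indicator {a..u n} s * k s) *\<^sub>R H (u n) s) = indicator {a..u n} s * \<bar>k s\<bar> * norm (H (u n) s)"
        by (simp add: abs_mult)
      also have "\<dots> \<le> 1 * \<bar>k s\<bar> * Bd"
        using \<open>norm (H (u n) s) \<le> Bd\<close> \<open>0 \<le> Bd\<close>
        by (intro mult_mono) (auto simp: indicator_def)
      finally show "norm ((indicator {a..u n} s * k s) *\<^sub>R H (u n) s) \<le> \<bar>k s\<bar> * Bd" by simp
    qed
  qed
qed


lemma indicator_Icc_upper_measurable[measurable]:
  fixes a :: real
  shows "(\<lambda>z::real\<times>real. indicator {a..fst z} (snd z) :: real) \<in> borel_measurable (lborel \<Otimes>\<^sub>M lborel)"
proof -
  let ?A = "{z::real\<times>real. a \<le> snd z \<and> snd z \<le> fst z}"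
  have "(\<lambda>z. indicator {a..fst z} (snd z) :: real) = indicator ?A"
    by (auto simp: indicator_def fun_eq_iff)
  moreover have "closed ?A"
    by (intro closed_Collect_conj closed_Collect_le continuous_intros)
  hence "?A \<in> sets borel" by (rule borel_closed)
  hence "?A \<in> sets (lborel \<Otimes>\<^sub>M lborel)" by (simp add: borel_prod[symmetric])
  ultimately show ?thesis by simp
qed

lemma indicator_Icc_lower_measurable[measurable]:
  fixes b :: real
  shows "(\<lambda>z::real\<times>real. indicator {fst z..b} (snd z) :: real) \<in> borel_measurable (lborel \<Otimes>\<^sub>M lborel)"
proof -
  let ?A = "{z::real\<times>real. fst z \<le> snd z \<and> snd z \<le> b}"
  have "(\<lambda>z. indicator {fst z..b} (snd z) :: real) = indicator ?A"
    by (auto simp: indicator_def fun_eq_iff)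
  moreover have "closed ?A"
    by (intro closed_Collect_conj closed_Collect_le continuous_intros)
  hence "?A \<in> sets borel" by (rule borel_closed)
  hence "?A \<in> sets (lborel \<Otimes>\<^sub>M lborel)" by (simp add: borel_prod[symmetric])
  ultimately show ?thesis by simp
qed

lemma integrable_pair_conv_bound:
  fixes h :: "real \<Rightarrow> real \<Rightarrow> 'a::{banach,second_countable_topology}"
  assumes meas: "(\<lambda>z. h (fst z) (snd z)) \<in> borel_measurable (lborel \<Otimes>\<^sub>M lborel)"
  and k: "integrable lborel k" and p: "integrable lborel p"
  and bound: "\<And>x y. norm (h x y) \<le> k (y - x) * p x"
  shows "integrable (lborel \<Otimes>\<^sub>M lborel) (\<lambda>(x,y). h x y)"
proof -
  have bd: "norm (h x y) \<le> \<bar>k (y - x)\<bar> * \<bar>p x\<bar>" for x y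
    using bound[of x y] by (metis abs_ge_self abs_mult order_trans)
  have km[measurable]: "k \<in> borel_measurable borel" and pm[measurable]: "p \<in> borel_measurable borel"
    using borel_measurable_integrable[OF k] borel_measurable_integrable[OF p] by simp_all
  have m2[measurable]: "(\<lambda>(x,y). h x y) \<in> borel_measurable (lborel \<Otimes>\<^sub>M lborel)"
    using meas by (simp add: case_prod_beta')
  have mnorm: "(\<lambda>(x,y). norm (h x y)) \<in> borel_measurable (lborel \<Otimes>\<^sub>M lborel)"
    using measurable_compose[OF meas borel_measurable_norm] by (simp add: case_prod_beta' comp_def)
  have inty: "integrable lborel (\<lambda>y. \<bar>k (y - x)\<bar> * \<bar>p x\<bar>)" for x
    using lborel_integrable_shift(1)[OF integrable_abs[OF k], of x] by auto
  have mx: "(\<lambda>y. h x y) \<in> borel_measurable lborel" for x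
    using measurable_Pair2[OF m2, of x] by simp
  have inth: "integrable lborel (\<lambda>y. h x y)" for x
    by (rule Bochner_Integration.integrable_bound[OF inty[of x] mx]) (rule AE_I2, use bd in \<open>simp\<close>)
  show ?thesis
  proof (rule lborel_pair.Fubini_integrable)
    show "(\<lambda>(x,y). h x y) \<in> borel_measurable (lborel \<Otimes>\<^sub>M lborel)" by (rule m2)
    show "AE x in lborel. integrable lborel (\<lambda>y. case (x, y) of (x, y) \<Rightarrow> h x y)"
      using inth by simp
    have intk: "(\<integral>y. \<bar>k (y - x)\<bar> \<partial>lborel) = (\<integral>y. \<bar>k y\<bar> \<partial>lborel)" for x
      using lborel_integral_shift[of "\<lambda>y. \<bar>k y\<bar>" x] by simp
    have "(\<lambda>x. \<integral>y. norm (h x y) \<partial>lborel) \<in> borel_measurable lborel"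
      using lborel.borel_measurable_lebesgue_integral[of "\<lambda>x y. norm (h x y)" lborel] mnorm by simp
    moreover have "integrable lborel (\<lambda>x. \<bar>p x\<bar> * (\<integral>y. \<bar>k y\<bar> \<partial>lborel))"
      using integrable_abs[OF p] by (rule integrable_mult_left)
    moreover have "norm (\<integral>y. norm (h x y) \<partial>lborel) \<le> norm (\<bar>p x\<bar> * (\<integral>y. \<bar>k y\<bar> \<partial>lborel))" for x
    proof -
      have "norm (\<integral>y. norm (h x y) \<partial>lborel) = (\<integral>y. norm (h x y) \<partial>lborel)"
        by (simp add: integral_nonneg_AE)
      also have "\<dots> \<le> (\<integral>y. \<bar>k (y - x)\<bar> * \<bar>p x\<bar> \<partial>lborel)"
        by (rule integral_mono[OF integrable_norm[OF inth] inty]) (use bd in auto)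
      also have "\<dots> = \<bar>p x\<bar> * (\<integral>y. \<bar>k y\<bar> \<partial>lborel)"
        using intk[of x] by (simp add: mult.commute)
      also have "\<dots> \<le> norm (\<bar>p x\<bar> * (\<integral>y. \<bar>k y\<bar> \<partial>lborel))" by simp
      finally show ?thesis .
    qed
    ultimately have I: "integrable lborel (\<lambda>x. \<integral>y. norm (h x y) \<partial>lborel)"
      by (rule_tac Bochner_Integration.integrable_bound[where f="\<lambda>x. \<bar>p x\<bar> * (\<integral>y. \<bar>k y\<bar> \<partial>lborel)"]) (auto intro: AE_I2)
    show "integrable lborel (\<lambda>x. \<integral>y. norm (case (x, y) of (x, y) \<Rightarrow> h x y) \<partial>lborel)"
      using I by (simp only: prod.case)
  qed
qed
lemma Fubini_conv_bound:
  fixes h :: "real \<Rightarrow> real \<Rightarrow> 'a::{banach,second_countable_topology}"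
  assumes meas: "(\<lambda>z. h (fst z) (snd z)) \<in> borel_measurable (lborel \<Otimes>\<^sub>M lborel)"
  and k: "integrable lborel k" and p: "integrable lborel p"
  and bound: "\<And>x y. norm (h x y) \<le> k (x - y) * p y"
  shows "integrable (lborel \<Otimes>\<^sub>M lborel) (\<lambda>(x,y). h x y)"
    and "AE x in lborel. integrable lborel (h x)"
    and "(\<integral>x. \<integral>y. h x y \<partial>lborel \<partial>lborel) = (\<integral>y. \<integral>x. h x y \<partial>lborel \<partial>lborel)"
    and "integrable lborel (\<lambda>y. \<integral>x. h x y \<partial>lborel)"
proof -
  have m': "(\<lambda>z. h (snd z) (fst z)) \<in> borel_measurable (lborel \<Otimes>\<^sub>M lborel)"
  proof -
    have "(\<lambda>z. (snd z, fst z)) \<in> measurable (lborel \<Otimes>\<^sub>M lborel) (lborel \<Otimes>\<^sub>M lborel)" by measurable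
    from measurable_compose[OF this meas] show ?thesis by simp
  qed
  have I': "integrable (lborel \<Otimes>\<^sub>M lborel) (\<lambda>(y,x). h x y)"
    using integrable_pair_conv_bound[of "\<lambda>y x. h x y", OF m' k p] bound by simp
  show "integrable lborel (\<lambda>y. \<integral>x. h x y \<partial>lborel)"
    using lborel_pair.integrable_fst'[OF I'] by simp
  from lborel_pair.integrable_product_swap[OF I']
  show I: "integrable (lborel \<Otimes>\<^sub>M lborel) (\<lambda>(x,y). h x y)" by (simp add: case_prod_beta')
  show "AE x in lborel. integrable lborel (h x)"
    using lborel_pair.AE_integrable_fst[OF I] .
  show "(\<integral>x. \<integral>y. h x y \<partial>lborel \<partial>lborel) = (\<integral>y. \<integral>x. h x y \<partial>lborel \<partial>lborel)"
    using lborel_pair.Fubini_integral[OF I] by simp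
qed


lemma L2_on_indicator:
  fixes f :: "real \<Rightarrow> 'a::{banach,second_countable_topology}"
  assumes "L2_on {a..b} f"
  shows "(\<lambda>s. indicator {a..b} s *\<^sub>R f s) \<in> borel_measurable lborel"
    and "integrable lborel (\<lambda>s. (norm (indicator {a..b} s *\<^sub>R f s))^2)"
    and "integrable lborel (\<lambda>s. norm (indicator {a..b} s *\<^sub>R f s))"
proof -
  show m: "(\<lambda>s. indicator {a..b} s *\<^sub>R f s) \<in> borel_measurable lborel"
    using assms by (simp add: L2_on_def set_borel_measurable_def)
  have "integrable lborel (\<lambda>s. indicator {a..b} s *\<^sub>R (norm (f s))^2)"
    using assms by (simp add: L2_on_def set_integrable_def)
  moreover have "(\<lambda>s. indicator {a..b} s *\<^sub>R (norm (f s))^2) = (\<lambda>s. (norm (indicator {a..b} s *\<^sub>R f s))^2)"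
    by (auto simp: indicator_def fun_eq_iff)
  ultimately show sq: "integrable lborel (\<lambda>s. (norm (indicator {a..b} s *\<^sub>R f s))^2)" by simp
  show "integrable lborel (\<lambda>s. norm (indicator {a..b} s *\<^sub>R f s))"
  proof (rule Bochner_Integration.integrable_bound)
    show "integrable lborel (\<lambda>s. indicator {a..b} s + (norm (indicator {a..b} s *\<^sub>R f s))^2)"
      by (rule Bochner_Integration.integrable_add[OF _ sq], rule integrable_real_indicator)
         (auto simp: emeasure_lborel_Icc_eq)
    show "(\<lambda>s. norm (indicator {a..b} s *\<^sub>R f s)) \<in> borel_measurable lborel" using m by measurable
    show "AE x in lborel. norm (norm (indicator {a..b} x *\<^sub>R f x)) \<le> norm (indicator {a..b} x + (norm (indicator {a..b} x *\<^sub>R f x))\<^sup>2)"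
    proof (rule AE_I2)
      fix x
      let ?n = "norm (indicator {a..b} x *\<^sub>R f x)"
      have h: "0 \<le> (?n - 1)^2" by simp
      have "(?n - 1)^2 = ?n^2 - 2 * ?n + 1" by (simp add: power2_diff)
      hence "?n \<le> 1 + ?n^2" using h by (smt (verit) norm_ge_zero zero_le_power2)
      moreover have "x \<notin> {a..b} \<Longrightarrow> ?n = 0" by simp
      ultimately have "?n \<le> indicator {a..b} x + ?n^2" by (cases "x \<in> {a..b}") auto
      thus "norm (norm (indicator {a..b} x *\<^sub>R f x)) \<le> norm (indicator {a..b} x + (norm (indicator {a..b} x *\<^sub>R f x))\<^sup>2)"
        by (simp add: indicator_def)
    qed
  qed
qed

lemma abs_mult_le_half_sum_sq: "\<bar>x\<bar> * \<bar>y\<bar> \<le> ((x::real)^2 + y^2) / 2"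
proof -
  have "0 \<le> (\<bar>x\<bar> - \<bar>y\<bar>)^2" by simp
  also have "(\<bar>x\<bar> - \<bar>y\<bar>)^2 = x^2 + y^2 - 2 * (\<bar>x\<bar> * \<bar>y\<bar>)" by (simp add: power2_diff power2_abs)
  finally show ?thesis by simp
qed

lemma integrable_norm_diff_sq:
  fixes f g :: "'a \<Rightarrow> 'b::{banach,second_countable_topology}"
  assumes [measurable]: "f \<in> borel_measurable M" "g \<in> borel_measurable M"
    and f: "integrable M (\<lambda>x. (norm (f x))^2)" and g: "integrable M (\<lambda>x. (norm (g x))^2)"
  shows "integrable M (\<lambda>x. (norm (f x - g x))^2)"
proof (rule Bochner_Integration.integrable_bound[OF Bochner_Integration.integrable_add[OF f g, THEN integrable_mult_right[of 2]]])
  show "AE x in M. norm ((norm (f x - g x))^2) \<le> norm (2 * ((norm (f x))^2 + (norm (g x))^2))"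
  proof (rule AE_I2)
    fix x
    have "(norm (f x - g x))^2 \<le> (norm (f x) + norm (g x))^2"
      by (rule power_mono[OF norm_triangle_ineq4]) simp
    also have "\<dots> \<le> 2 * ((norm (f x))^2 + (norm (g x))^2)"
      using abs_mult_le_half_sum_sq[of "norm (f x)" "norm (g x)"] by (simp add: power2_sum)
    finally show "norm ((norm (f x - g x))^2) \<le> norm (2 * ((norm (f x))^2 + (norm (g x))^2))" by simp
  qed
qed measurable

lemma integral_suminf_dominated:
  fixes F :: "nat \<Rightarrow> real \<Rightarrow> 'a::{banach,second_countable_topology}"
  assumes F: "\<And>n. integrable lborel (F n)" and ab: "a \<le> b"
    and bound: "\<And>n s. norm (F n s) \<le> indicator {a..b} s * \<beta> n" and \<beta>: "\<And>n. 0 \<le> \<beta> n" "summable \<beta>"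
  shows "(\<integral>s. (\<Sum>n. F n s) \<partial>lborel) = (\<Sum>n. \<integral>s. F n s \<partial>lborel)"
proof (rule integral_suminf[OF F])
  have "norm (F n s) \<le> \<beta> n" for n s
    using bound[of n s] \<beta>(1)[of n] by (cases "s \<in> {a..b}") auto
  thus "AE s in lborel. summable (\<lambda>n. norm (F n s))"
    by (intro AE_I2 summable_comparison_test'[OF \<beta>(2), where N=0]) auto
  have "(\<integral>s. norm (F n s) \<partial>lborel) \<le> (\<integral>s. indicator {a..b} s * \<beta> n \<partial>lborel)" for n
    by (rule integral_mono[OF _ integrable_indicator_Icc_const bound]) (use F in simp)
  hence "norm (\<integral>s. norm (F n s) \<partial>lborel) \<le> (b - a) * \<beta> n" for n
    using ab by (simp add: emeasure_lborel_Icc_eq integral_nonneg_AE)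
  thus "summable (\<lambda>n. \<integral>s. norm (F n s) \<partial>lborel)"
    by (intro summable_comparison_test'[OF summable_mult[OF \<beta>(2)], where N=0]) auto
qed

section \<open>Strongly continuous operator families on an interval\<close>

definition op_family :: "real \<Rightarrow> (real \<Rightarrow> 'a::real_normed_vector \<Rightarrow> 'a) \<Rightarrow> real \<Rightarrow> bool" where
  "op_family T P c \<longleftrightarrow> (\<forall>r\<in>{0..T}. bounded_linear (P r)) \<and> (\<forall>x. continuous_on {0..T} (\<lambda>r. P r x))
     \<and> (\<forall>r\<in>{0..T}. \<forall>x. norm (P r x) \<le> c * norm x)"

(* Families are only meaningful on [0,T]. Evaluating them at clamp T r makes every integrand
   P (t - s) (v s) globally defined and measurable, while the indicator of the interval of
   integration keeps the value of the integral unchanged. *)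
definition clamp :: "real \<Rightarrow> real \<Rightarrow> real" where "clamp T r = min T (max 0 r)"

lemma clamp_id[simp]: "r \<in> {0..T} \<Longrightarrow> clamp T r = r" by (auto simp: clamp_def)
lemma clamp_in: "0 \<le> T \<Longrightarrow> clamp T r \<in> {0..T}" by (auto simp: clamp_def)
lemma continuous_on_clamp: "continuous_on UNIV (clamp T)"
  unfolding clamp_def by (intro continuous_intros)

lemma op_family_continuous_on_pair:
  assumes "op_family T P c"
  shows "continuous_on ({0..T} \<times> UNIV) (\<lambda>z. P (fst z) (snd z))"
proof -
  have bl: "\<And>r. r\<in>{0..T} \<Longrightarrow> bounded_linear (P r)" and ct: "\<And>x. continuous_on {0..T} (\<lambda>r. P r x)"
    and bd: "\<And>r x. r\<in>{0..T} \<Longrightarrow> norm (P r x) \<le> c * norm x" using assms by (auto simp: op_family_def)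
  show ?thesis unfolding continuous_on_iff
  proof (intro ballI allI impI)
    fix z e assume z: "z \<in> {0..T} \<times> (UNIV::'a set)" and e: "(0::real) < e"
    obtain r0 y0 where z0: "z = (r0, y0)" by (cases z)
    have r0: "r0 \<in> {0..T}" using z z0 by auto
    have e2: "e/2 > 0" using e by simp
    from ct[of y0, unfolded continuous_on_iff] r0 e2 obtain d1 where d1: "d1 > 0"
      "\<And>r. r \<in> {0..T} \<Longrightarrow> dist r r0 < d1 \<Longrightarrow> dist (P r y0) (P r0 y0) < e/2" by metis
    define d where "d = min d1 (e / (2 * (\<bar>c\<bar> + 1)))"
    have dpos: "d > 0" using d1 e by (simp add: d_def)
    show "\<exists>d>0. \<forall>z'\<in>{0..T} \<times> UNIV. dist z' z < d \<longrightarrow> dist (P (fst z') (snd z')) (P (fst z) (snd z)) < e"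
    proof (intro exI[of _ d] conjI ballI impI dpos)
      fix z' assume z': "z' \<in> {0..T} \<times> (UNIV::'a set)" and dz: "dist z' z < d"
      obtain r y where zz: "z' = (r, y)" by (cases z')
      have r: "r \<in> {0..T}" using z' zz by auto
      have dr: "dist r r0 < d1" using dz dist_fst_le[of z' z] by (simp add: zz z0 d_def)
      have dy: "dist y y0 < e / (2 * (\<bar>c\<bar> + 1))" using dz dist_snd_le[of z' z] by (simp add: zz z0 d_def)
      have "P r y - P r0 y0 = P r (y - y0) + (P r y0 - P r0 y0)"
        using linear_diff[OF bounded_linear.linear[OF bl[OF r]]] by simp
      hence "dist (P r y) (P r0 y0) \<le> norm (P r (y - y0)) + dist (P r y0) (P r0 y0)"
        by (metis add_diff_eq dist_norm norm_triangle_ineq)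
      also have "norm (P r (y - y0)) \<le> c * norm (y - y0)" using bd[OF r] .
      also have "c * norm (y - y0) \<le> (\<bar>c\<bar> + 1) * norm (y - y0)"
        by (intro mult_right_mono) auto
      also have "(\<bar>c\<bar> + 1) * norm (y - y0) \<le> (\<bar>c\<bar> + 1) * (e / (2 * (\<bar>c\<bar> + 1)))"
        using dy by (intro mult_left_mono) (auto simp: dist_norm)
      also have "\<dots> = e/2" by (simp add: field_simps)
      finally show "dist (P (fst z') (snd z')) (P (fst z) (snd z)) < e"
        using d1(2)[OF r dr] by (simp add: zz z0)
    qed
  qed
qed

lemma op_family_clamp_continuous_pair:
  assumes "op_family T P c" "0 \<le> T"
  shows "continuous_on UNIV (\<lambda>z. P (clamp T (fst z)) (snd z))"
proof -
  have "continuous_on UNIV (\<lambda>z. (clamp T (fst z), snd z))"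
    by (intro continuous_intros continuous_on_compose2[OF continuous_on_clamp]) auto
  moreover have "(\<lambda>z. (clamp T (fst z), snd z)) ` UNIV \<subseteq> {0..T} \<times> UNIV"
    using clamp_in[OF assms(2)] by auto
  ultimately show ?thesis
    using continuous_on_compose2[OF op_family_continuous_on_pair[OF assms(1)], of UNIV "\<lambda>z. (clamp T (fst z), snd z)"] by (auto)
qed

lemma op_family_clamp_measurable:
  fixes P :: "real \<Rightarrow> 'a::{real_normed_vector,second_countable_topology} \<Rightarrow> 'a"
  assumes "op_family T P c" "0 \<le> T" and [measurable]: "a \<in> borel_measurable M" "b \<in> borel_measurable M"
  shows "(\<lambda>w. P (clamp T (a w)) (b w)) \<in> borel_measurable M"
proof -
  have "(\<lambda>z. P (clamp T (fst z)) (snd z)) \<in> borel_measurable borel"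
    by (rule borel_measurable_continuous_onI[OF op_family_clamp_continuous_pair[OF assms(1,2)]])
  hence m: "(\<lambda>z. P (clamp T (fst z)) (snd z)) \<in> borel_measurable (borel \<Otimes>\<^sub>M borel)"
    by (simp add: borel_prod)
  have "(\<lambda>w. (a w, b w)) \<in> measurable M (borel \<Otimes>\<^sub>M borel)" by measurable
  from measurable_compose[OF this m] show ?thesis by simp
qed


lemma op_family_clamp_continuous:
  assumes "op_family T P c" "0 \<le> T" "continuous_on A f"
  shows "continuous_on A (\<lambda>t. P (clamp T (f t)) x)"
proof -
  have c: "continuous_on UNIV (\<lambda>r::real. (r, x))" by (intro continuous_intros)
  have "continuous_on UNIV (\<lambda>r. P (clamp T (fst (r,x))) (snd (r,x)))"
    by (rule continuous_on_compose2[OF op_family_clamp_continuous_pair[OF assms(1,2)] c]) auto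
  hence "continuous_on UNIV (\<lambda>r. P (clamp T r) x)" by simp
  thus ?thesis by (rule continuous_on_compose2[OF _ assms(3)]) auto
qed

lemma op_family_bounded_linear: "op_family T P c \<Longrightarrow> r \<in> {0..T} \<Longrightarrow> bounded_linear (P r)"
  by (auto simp: op_family_def)
lemma op_family_norm_le: "op_family T P c \<Longrightarrow> r \<in> {0..T} \<Longrightarrow> norm (P r x) \<le> c * norm x"
  by (auto simp: op_family_def)
lemma op_family_continuous: "op_family T P c \<Longrightarrow> continuous_on {0..T} (\<lambda>r. P r x)"
  by (auto simp: op_family_def)

lemma op_family_diff: "op_family T P c \<Longrightarrow> r \<in> {0..T} \<Longrightarrow> P r (x - y) = P r x - P r y"
  using linear_diff[OF bounded_linear.linear[OF op_family_bounded_linear]] by blast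
lemma op_family_add: "op_family T P c \<Longrightarrow> r \<in> {0..T} \<Longrightarrow> P r (x + y) = P r x + P r y"
  using linear_add[OF bounded_linear.linear[OF op_family_bounded_linear]] by blast
lemma op_family_scaleR: "op_family T P c \<Longrightarrow> r \<in> {0..T} \<Longrightarrow> P r (a *\<^sub>R y) = a *\<^sub>R P r y"
  using linear_scale[OF bounded_linear.linear[OF op_family_bounded_linear]] by blast
lemma op_family_minus: "op_family T P c \<Longrightarrow> r \<in> {0..T} \<Longrightarrow> P r (- y) = - P r y"
  using linear_neg[OF bounded_linear.linear[OF op_family_bounded_linear]] by blast
lemma op_family_zero: "op_family T P c \<Longrightarrow> r \<in> {0..T} \<Longrightarrow> P r 0 = 0"
  using linear_0[OF bounded_linear.linear[OF op_family_bounded_linear]] by blast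

lemma op_family_intro:
  assumes "\<And>r x y. r \<in> {0..T} \<Longrightarrow> P r (x + y) = P r x + P r y"
    and "\<And>r a x. r \<in> {0..T} \<Longrightarrow> P r (a *\<^sub>R x) = a *\<^sub>R P r x"
    and "\<And>r x. r \<in> {0..T} \<Longrightarrow> norm (P r x) \<le> c * norm x"
    and "\<And>x. continuous_on {0..T} (\<lambda>r. P r x)"
  shows "op_family T P c"
  unfolding op_family_def
  using assms by (auto intro!: bounded_linear_intro[where K=c] simp: mult.commute)

context
  fixes P Q :: "real \<Rightarrow> 'a::{banach,second_countable_topology} \<Rightarrow> 'a" and T c1 c2 :: real
  assumes P_fam: "op_family T P c1" and Q_fam: "op_family T Q c2" and T: "0 \<le> T" and c1: "0 \<le> c1" and c2: "0 \<le> c2"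
begin

lemma conv_eq_clamped: "t \<in> {0..T} \<Longrightarrow> conv P Q t x = (\<integral>s. indicator {0..t} s *\<^sub>R P (clamp T (t - s)) (Q (clamp T s) x) \<partial>lborel)"
  unfolding conv_def set_lebesgue_integral_def
  by (rule Bochner_Integration.integral_cong) (auto simp: indicator_def)

lemma conv_integrand_measurable[measurable]: "(\<lambda>s. indicator {0..t} s *\<^sub>R P (clamp T (t - s)) (Q (clamp T s) x)) \<in> borel_measurable lborel"
proof -
  have [measurable]: "(\<lambda>s. Q (clamp T s) x) \<in> borel_measurable lborel"
    using op_family_clamp_measurable[OF Q_fam T, of "\<lambda>s. s" lborel "\<lambda>s. x"] by simp
  have [measurable]: "(\<lambda>s. P (clamp T (t - s)) (Q (clamp T s) x)) \<in> borel_measurable lborel"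
    using op_family_clamp_measurable[OF P_fam T, of "\<lambda>s. t - s" lborel "\<lambda>s. Q (clamp T s) x"] by simp
  show ?thesis by measurable
qed

lemma conv_integrand_integrable: "integrable lborel (\<lambda>s. indicator {0..t} s *\<^sub>R P (clamp T (t - s)) (Q (clamp T s) x))"
proof (rule Bochner_Integration.integrable_bound[OF _ conv_integrand_measurable])
  show "integrable lborel (\<lambda>s. indicator {0..t} s * (c1 * (c2 * norm x)))"
    by (rule integrable_mult_left, rule integrable_real_indicator) (auto simp: emeasure_lborel_Icc_eq)
  show "AE s in lborel. norm (indicator {0..t} s *\<^sub>R P (clamp T (t - s)) (Q (clamp T s) x)) \<le> norm (indicator {0..t} s * (c1 * (c2 * norm x)))"
  proof (rule AE_I2)
    fix s
    have "norm (P (clamp T (t - s)) (Q (clamp T s) x)) \<le> c1 * norm (Q (clamp T s) x)"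
      using op_family_norm_le[OF P_fam clamp_in[OF T]] .
    also have "\<dots> \<le> c1 * (c2 * norm x)"
      using op_family_norm_le[OF Q_fam clamp_in[OF T]] c1 by (intro mult_left_mono) auto
    finally show "norm (indicator {0..t} s *\<^sub>R P (clamp T (t - s)) (Q (clamp T s) x)) \<le> norm (indicator {0..t} s * (c1 * (c2 * norm x)))"
      using c1 c2 by (auto simp: indicator_def)
  qed
qed

lemma norm_conv_le:
  assumes t: "t \<in> {0..T}" and q: "\<And>s x. s \<in> {0..T} \<Longrightarrow> norm (Q s x) \<le> q s * norm x"
    and qc: "continuous_on {0..T} q"
  shows "norm (conv P Q t x) \<le> c1 * (\<integral>s. indicator {0..t} s * q s \<partial>lborel) * norm x"
proof -
  have qi: "integrable lborel (\<lambda>s. indicator {0..t} s * q s)"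
  proof -
    have "continuous_on {0..t} q" using qc t by (auto intro: continuous_on_subset)
    from borel_integrable_atLeastAtMost'[OF this] show ?thesis
      by (simp add: set_integrable_def mult.commute)
  qed
  have "norm (conv P Q t x) \<le> (\<integral>s. indicator {0..t} s * q s * (c1 * norm x) \<partial>lborel)"
    unfolding conv_eq_clamped[OF t]
  proof (rule norm_integral_le_integral)
    show "integrable lborel (\<lambda>s. indicator {0..t} s * q s * (c1 * norm x))"
      using qi by (rule integrable_mult_left)
    show "AE s in lborel. norm (indicator {0..t} s *\<^sub>R P (clamp T (t - s)) (Q (clamp T s) x)) \<le> indicator {0..t} s * q s * (c1 * norm x)"
    proof (rule AE_I2)
      fix s
      show "norm (indicator {0..t} s *\<^sub>R P (clamp T (t - s)) (Q (clamp T s) x)) \<le> indicator {0..t} s * q s * (c1 * norm x)"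
      proof (cases "s \<in> {0..t}")
        case True
        hence s: "s \<in> {0..T}" using t by auto
        have "norm (P (clamp T (t - s)) (Q (clamp T s) x)) \<le> c1 * norm (Q (clamp T s) x)"
          using op_family_norm_le[OF P_fam clamp_in[OF T]] .
        also have "\<dots> \<le> c1 * (q s * norm x)"
          using q[OF s, of x] c1 s by (intro mult_left_mono) auto
        finally show ?thesis using True s by (simp add: algebra_simps)
      qed simp
    qed
  qed
  also have "\<dots> = c1 * (\<integral>s. indicator {0..t} s * q s \<partial>lborel) * norm x"
    by (simp add: algebra_simps)
  finally show ?thesis .
qed

lemma continuous_on_conv: "continuous_on {0..T} (\<lambda>t. conv P Q t x)"
proof -
  have c: "continuous_on {0..T} (\<lambda>t. \<integral>s. (indicator {0..t} s * indicator {0..T} s) *\<^sub>R P (clamp T (t - s)) (Q (clamp T s) x) \<partial>lborel)"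
  proof (rule continuous_on_parametric_integral[where Bd="c1 * (c2 * norm x)"])
    show "integrable lborel (indicator {0..T} :: real \<Rightarrow> real)"
      by (intro integrable_real_indicator) (auto simp: emeasure_lborel_Icc_eq)
    show "(\<lambda>s. P (clamp T (t - s)) (Q (clamp T s) x)) \<in> borel_measurable lborel" for t
    proof -
      have [measurable]: "(\<lambda>s. Q (clamp T s) x) \<in> borel_measurable lborel"
        using op_family_clamp_measurable[OF Q_fam T, of "\<lambda>s. s" lborel "\<lambda>s. x"] by simp
      show ?thesis using op_family_clamp_measurable[OF P_fam T, of "\<lambda>s. t - s" lborel "\<lambda>s. Q (clamp T s) x"] by simp
    qed
    show "continuous_on {0..T} (\<lambda>t. P (clamp T (t - s)) (Q (clamp T s) x))" for s
      by (rule op_family_clamp_continuous[OF P_fam T]) (intro continuous_intros)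
    show "norm (P (clamp T (t - s)) (Q (clamp T s) x)) \<le> c1 * (c2 * norm x)" for t s
      by (rule order_trans[OF op_family_norm_le[OF P_fam clamp_in[OF T]] mult_left_mono[OF op_family_norm_le[OF Q_fam clamp_in[OF T]] c1]])
  qed
  have e: "t \<in> {0..T} \<Longrightarrow> (\<integral>s. (indicator {0..t} s * indicator {0..T} s) *\<^sub>R P (clamp T (t - s)) (Q (clamp T s) x) \<partial>lborel) = conv P Q t x" for t
    unfolding conv_eq_clamped
    by (rule Bochner_Integration.integral_cong) (auto simp: indicator_def)
  show ?thesis using continuous_on_cong[OF refl, THEN iffD1, OF e c] .
qed

lemma conv_linear:
  assumes t: "t \<in> {0..T}"
  shows "conv P Q t (x + y) = conv P Q t x + conv P Q t y" "conv P Q t (a *\<^sub>R x) = a *\<^sub>R conv P Q t x"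
proof -
  show "conv P Q t (x + y) = conv P Q t x + conv P Q t y"
    unfolding conv_eq_clamped[OF t]
    by (subst Bochner_Integration.integral_add[symmetric, OF conv_integrand_integrable conv_integrand_integrable],
        rule Bochner_Integration.integral_cong)
       (auto simp: op_family_add[OF Q_fam clamp_in[OF T]] op_family_add[OF P_fam clamp_in[OF T]] scaleR_add_right)
  show "conv P Q t (a *\<^sub>R x) = a *\<^sub>R conv P Q t x"
    unfolding conv_eq_clamped[OF t]
    by (subst integral_scaleR_right[symmetric], rule Bochner_Integration.integral_cong)
       (auto simp: op_family_scaleR[OF Q_fam clamp_in[OF T]] op_family_scaleR[OF P_fam clamp_in[OF T]])
qed

lemma conv_eq_shifted:
  assumes "r \<le> t" "t - r \<le> T"
  shows "conv P Q (t - r) y = (\<integral>\<sigma>. indicator {r..t} \<sigma> *\<^sub>R P (clamp T (t - \<sigma>)) (Q (clamp T (\<sigma> - r)) y) \<partial>lborel)"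
proof -
  have "conv P Q (t - r) y = (\<integral>q. indicator {0..t - r} q *\<^sub>R P (clamp T (t - r - q)) (Q (clamp T q) y) \<partial>lborel)"
    by (rule conv_eq_clamped) (use assms in auto)
  also have "\<dots> = (\<integral>\<sigma>. indicator {0..t - r} (\<sigma> - r) *\<^sub>R P (clamp T (t - r - (\<sigma> - r))) (Q (clamp T (\<sigma> - r)) y) \<partial>lborel)"
    by (rule lborel_integral_shift)
  also have "\<dots> = (\<integral>\<sigma>. indicator {r..t} \<sigma> *\<^sub>R P (clamp T (t - \<sigma>)) (Q (clamp T (\<sigma> - r)) y) \<partial>lborel)"
    by (rule Bochner_Integration.integral_cong) (auto simp: indicator_def)
  finally show ?thesis .
qed

lemma norm_conv_le_const:
  assumes t: "t \<in> {0..T}"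
  shows "norm (conv P Q t x) \<le> c1 * c2 * T * norm x"
proof -
  have "norm (conv P Q t x) \<le> c1 * (\<integral>s. indicator {0..t} s * c2 \<partial>lborel) * norm x"
    by (rule norm_conv_le[OF t op_family_norm_le[OF Q_fam]]) auto
  also have "\<dots> = c1 * c2 * t * norm x" using t by (simp add: emeasure_lborel_Icc_eq ac_simps)
  also have "\<dots> \<le> c1 * c2 * T * norm x" using t c1 c2 by (intro mult_right_mono mult_left_mono) auto
  finally show ?thesis .
qed

lemma op_family_conv: "op_family T (conv P Q) (c1 * c2 * T)"
  by (rule op_family_intro) (use conv_linear norm_conv_le_const continuous_on_conv in auto)

end

lemma op_family_mono: "op_family T P c \<Longrightarrow> (\<And>r x. r \<in> {0..T} \<Longrightarrow> norm (P r x) \<le> c' * norm x) \<Longrightarrow> op_family T P c'"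
  by (auto simp: op_family_def)

lemma integral_op_Fubini:
  fixes P :: "real \<Rightarrow> 'a::{banach,second_countable_topology} \<Rightarrow> 'a" and \<Phi> :: "real \<Rightarrow> real \<Rightarrow> 'a"
  assumes P_fam: "op_family T P c1" and T_nonneg: "0 \<le> T" and c1: "0 \<le> c1"
  and meas: "(\<lambda>z. \<Phi> (fst z) (snd z)) \<in> borel_measurable (lborel \<Otimes>\<^sub>M lborel)"
  and k: "integrable lborel k" and p: "integrable lborel p"
  and bound: "\<And>s \<sigma>. norm (\<Phi> s \<sigma>) \<le> k (s - \<sigma>) * p \<sigma>"
  shows "(\<integral>s. indicator {a..t} s *\<^sub>R P (clamp T (t - s)) (\<integral>\<sigma>. \<Phi> s \<sigma> \<partial>lborel) \<partial>lborel)
       = (\<integral>\<sigma>. \<integral>s. indicator {a..t} s *\<^sub>R P (clamp T (t - s)) (\<Phi> s \<sigma>) \<partial>lborel \<partial>lborel)"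
    and "integrable lborel (\<lambda>\<sigma>. \<integral>s. indicator {a..t} s *\<^sub>R P (clamp T (t - s)) (\<Phi> s \<sigma>) \<partial>lborel)"
proof -
  define h where "h s \<sigma> = indicator {a..t} s *\<^sub>R P (clamp T (t - s)) (\<Phi> s \<sigma>)" for s \<sigma>
  have mP: "(\<lambda>z. P (clamp T (t - fst z)) (\<Phi> (fst z) (snd z))) \<in> borel_measurable (lborel \<Otimes>\<^sub>M lborel)"
    by (rule op_family_clamp_measurable[OF P_fam T_nonneg]) (use meas in measurable)
  have mh: "(\<lambda>z. h (fst z) (snd z)) \<in> borel_measurable (lborel \<Otimes>\<^sub>M lborel)"
    unfolding h_def using mP by measurable
  have h_bound: "norm (h s \<sigma>) \<le> (c1 * \<bar>k (s - \<sigma>)\<bar>) * \<bar>p \<sigma>\<bar>" for s \<sigma>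
  proof -
    have "norm (h s \<sigma>) \<le> norm (P (clamp T (t - s)) (\<Phi> s \<sigma>))" by (simp add: h_def indicator_def)
    also have "\<dots> \<le> c1 * norm (\<Phi> s \<sigma>)" by (rule op_family_norm_le[OF P_fam clamp_in[OF T_nonneg]])
    also have "\<dots> \<le> c1 * (\<bar>k (s - \<sigma>)\<bar> * \<bar>p \<sigma>\<bar>)"
      using bound[of s \<sigma>] c1 by (intro mult_left_mono) (auto simp: abs_mult[symmetric] intro: order_trans[OF _ abs_ge_self])
    finally show ?thesis by (simp add: ac_simps)
  qed
  have F: "(\<integral>s. \<integral>\<sigma>. h s \<sigma> \<partial>lborel \<partial>lborel) = (\<integral>\<sigma>. \<integral>s. h s \<sigma> \<partial>lborel \<partial>lborel)"
    by (rule Fubini_conv_bound(3)[OF mh _ _ h_bound]) (use k p in auto)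
  show "integrable lborel (\<lambda>\<sigma>. \<integral>s. indicator {a..t} s *\<^sub>R P (clamp T (t - s)) (\<Phi> s \<sigma>) \<partial>lborel)"
    using Fubini_conv_bound(4)[OF mh _ _ h_bound] k p unfolding h_def by auto
  have AEi: "AE s in lborel. integrable lborel (\<Phi> s)"
    by (rule Fubini_conv_bound(2)[OF meas k p bound])
  have mI: "(\<lambda>s. \<integral>\<sigma>. \<Phi> s \<sigma> \<partial>lborel) \<in> borel_measurable lborel"
    using lborel.borel_measurable_lebesgue_integral[of \<Phi> lborel] meas by (simp add: case_prod_beta')
  have "(\<integral>s. indicator {a..t} s *\<^sub>R P (clamp T (t - s)) (\<integral>\<sigma>. \<Phi> s \<sigma> \<partial>lborel) \<partial>lborel) = (\<integral>s. \<integral>\<sigma>. h s \<sigma> \<partial>lborel \<partial>lborel)"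
  proof (rule integral_cong_AE)
    have "(\<lambda>s. P (clamp T (t - s)) (\<integral>\<sigma>. \<Phi> s \<sigma> \<partial>lborel)) \<in> borel_measurable lborel"
      by (rule op_family_clamp_measurable[OF P_fam T_nonneg]) (use mI in measurable)
    thus "(\<lambda>s. indicator {a..t} s *\<^sub>R P (clamp T (t - s)) (\<integral>\<sigma>. \<Phi> s \<sigma> \<partial>lborel)) \<in> borel_measurable lborel"
      by measurable
    show "(\<lambda>s. \<integral>\<sigma>. h s \<sigma> \<partial>lborel) \<in> borel_measurable lborel"
      using lborel.borel_measurable_lebesgue_integral[of h lborel] mh by (simp add: case_prod_beta')
    show "AE s in lborel. indicator {a..t} s *\<^sub>R P (clamp T (t - s)) (\<integral>\<sigma>. \<Phi> s \<sigma> \<partial>lborel) = (\<integral>\<sigma>. h s \<sigma> \<partial>lborel)"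
      using AEi
    proof eventually_elim
      case (elim s)
      have "(\<integral>\<sigma>. h s \<sigma> \<partial>lborel) = indicator {a..t} s *\<^sub>R (\<integral>\<sigma>. P (clamp T (t - s)) (\<Phi> s \<sigma>) \<partial>lborel)"
        unfolding h_def by simp
      also have "(\<integral>\<sigma>. P (clamp T (t - s)) (\<Phi> s \<sigma>) \<partial>lborel) = P (clamp T (t - s)) (\<integral>\<sigma>. \<Phi> s \<sigma> \<partial>lborel)"
        by (rule integral_bounded_linear[OF op_family_bounded_linear[OF P_fam clamp_in[OF T_nonneg]] elim])
      finally show ?case by simp
    qed
  qed
  also have "\<dots> = (\<integral>\<sigma>. \<integral>s. h s \<sigma> \<partial>lborel \<partial>lborel)" by (rule F)
  finally show "(\<integral>s. indicator {a..t} s *\<^sub>R P (clamp T (t - s)) (\<integral>\<sigma>. \<Phi> s \<sigma> \<partial>lborel) \<partial>lborel)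
       = (\<integral>\<sigma>. \<integral>s. indicator {a..t} s *\<^sub>R P (clamp T (t - s)) (\<Phi> s \<sigma>) \<partial>lborel \<partial>lborel)"
    unfolding h_def .
qed


definition conv_from :: "real \<Rightarrow> (real \<Rightarrow> 'a::{banach,second_countable_topology} \<Rightarrow> 'a) \<Rightarrow> real \<Rightarrow> real \<Rightarrow> (real \<Rightarrow> 'a) \<Rightarrow> 'a" where
  "conv_from T P a t v = (\<integral>s. indicator {a..t} s *\<^sub>R P (clamp T (t - s)) (v s) \<partial>lborel)"


context
  fixes P :: "real \<Rightarrow> 'a::{banach,second_countable_topology} \<Rightarrow> 'a" and T c1 :: real
  assumes P_fam: "op_family T P c1" and T_nonneg: "0 \<le> T" and c1: "0 \<le> c1"
begin

lemma conv_from_integrand_measurable: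
  assumes [measurable]: "v \<in> borel_measurable lborel"
  shows "(\<lambda>s. indicator {a..t} s *\<^sub>R P (clamp T (t - s)) (v s)) \<in> borel_measurable lborel"
proof -
  have [measurable]: "(\<lambda>s. P (clamp T (t - s)) (v s)) \<in> borel_measurable lborel"
    by (rule op_family_clamp_measurable[OF P_fam T_nonneg]) measurable
  show ?thesis by measurable
qed

lemma conv_from_integrand_integrable:
  assumes v: "v \<in> borel_measurable lborel" and vb: "integrable lborel vb" and b: "\<And>s. norm (v s) \<le> vb s"
  shows "integrable lborel (\<lambda>s. indicator {a..t} s *\<^sub>R P (clamp T (t - s)) (v s))"
proof (rule Bochner_Integration.integrable_bound[OF _ conv_from_integrand_measurable[OF v]])
  show "integrable lborel (\<lambda>s. c1 * vb s)" using vb by simp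
  show "AE s in lborel. norm (indicator {a..t} s *\<^sub>R P (clamp T (t - s)) (v s)) \<le> norm (c1 * vb s)"
  proof (rule AE_I2)
    fix s
    have "norm (indicator {a..t} s *\<^sub>R P (clamp T (t - s)) (v s)) \<le> norm (P (clamp T (t - s)) (v s))"
      by (simp add: indicator_def)
    also have "\<dots> \<le> c1 * norm (v s)" by (rule op_family_norm_le[OF P_fam clamp_in[OF T_nonneg]])
    also have "\<dots> \<le> c1 * vb s" by (rule mult_left_mono[OF b c1])
    also have "\<dots> \<le> norm (c1 * vb s)" by simp
    finally show "norm (indicator {a..t} s *\<^sub>R P (clamp T (t - s)) (v s)) \<le> norm (c1 * vb s)" .
  qed
qed

lemma norm_conv_from_le:
  assumes vb: "integrable lborel vb" and b: "\<And>s. norm (v s) \<le> vb s"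
  shows "norm (conv_from T P a t v) \<le> c1 * (\<integral>s. vb s \<partial>lborel)"
proof -
  have "norm (conv_from T P a t v) \<le> (\<integral>s. c1 * vb s \<partial>lborel)"
    unfolding conv_from_def
  proof (rule norm_integral_le_integral)
    show "integrable lborel (\<lambda>s. c1 * vb s)" using vb by simp
    show "AE s in lborel. norm (indicator {a..t} s *\<^sub>R P (clamp T (t - s)) (v s)) \<le> c1 * vb s"
    proof (rule AE_I2)
      fix s
      have "norm (indicator {a..t} s *\<^sub>R P (clamp T (t - s)) (v s)) \<le> norm (P (clamp T (t - s)) (v s))"
        by (simp add: indicator_def)
      also have "\<dots> \<le> c1 * norm (v s)" by (rule op_family_norm_le[OF P_fam clamp_in[OF T_nonneg]])
      also have "\<dots> \<le> c1 * vb s" by (rule mult_left_mono[OF b c1])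
      finally show "norm (indicator {a..t} s *\<^sub>R P (clamp T (t - s)) (v s)) \<le> c1 * vb s" .
    qed
  qed
  thus ?thesis by simp
qed

lemma conv_from_add:
  assumes v: "v \<in> borel_measurable lborel" "integrable lborel vb" "\<And>s. norm (v s) \<le> vb s"
  and w: "w \<in> borel_measurable lborel" "integrable lborel wb" "\<And>s. norm (w s) \<le> wb s"
  shows "conv_from T P a t (\<lambda>s. v s + w s) = conv_from T P a t v + conv_from T P a t w"
  unfolding conv_from_def
  by (subst Bochner_Integration.integral_add[symmetric, OF conv_from_integrand_integrable[OF v]
        conv_from_integrand_integrable[OF w]], rule Bochner_Integration.integral_cong)
     (auto simp: op_family_add[OF P_fam clamp_in[OF T_nonneg]] scaleR_add_right)

lemma conv_from_diff:
  assumes v: "v \<in> borel_measurable lborel" "integrable lborel vb" "\<And>s. norm (v s) \<le> vb s"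
  and w: "w \<in> borel_measurable lborel" "integrable lborel wb" "\<And>s. norm (w s) \<le> wb s"
  shows "conv_from T P a t (\<lambda>s. v s - w s) = conv_from T P a t v - conv_from T P a t w"
  unfolding conv_from_def
  by (subst Bochner_Integration.integral_diff[symmetric, OF conv_from_integrand_integrable[OF v]
        conv_from_integrand_integrable[OF w]], rule Bochner_Integration.integral_cong)
     (auto simp: op_family_diff[OF P_fam clamp_in[OF T_nonneg]] scaleR_diff_right)

lemma conv_from_measurable:
  assumes [measurable]: "v \<in> borel_measurable lborel"
  shows "(\<lambda>t. conv_from T P a t v) \<in> borel_measurable lborel"
proof -
  have [measurable]: "(\<lambda>z. P (clamp T (fst z - snd z)) (v (snd z))) \<in> borel_measurable (lborel \<Otimes>\<^sub>M lborel)"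
    by (rule op_family_clamp_measurable[OF P_fam T_nonneg]) measurable
  have "(\<lambda>z. indicator {a..fst z} (snd z) *\<^sub>R P (clamp T (fst z - snd z)) (v (snd z))) \<in> borel_measurable (lborel \<Otimes>\<^sub>M lborel)"
    by measurable
  hence "(\<lambda>t. \<integral>s. indicator {a..t} s *\<^sub>R P (clamp T (t - s)) (v s) \<partial>lborel) \<in> borel_measurable lborel"
    using lborel.borel_measurable_lebesgue_integral[of "\<lambda>t s. indicator {a..t} s *\<^sub>R P (clamp T (t - s)) (v s)" lborel]
    by (simp add: case_prod_beta')
  thus ?thesis unfolding conv_from_def .
qed

end

lemma conv_from_assoc:
  fixes P Q :: "real \<Rightarrow> 'a::{banach,second_countable_topology} \<Rightarrow> 'a"
  assumes P: "op_family T P cP" and Q: "op_family T Q cQ" and cP: "0 \<le> cP" and cQ: "0 \<le> cQ"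
    and T: "0 \<le> T" and a: "0 \<le> a" and t: "t \<le> T"
    and v[measurable]: "v \<in> borel_measurable lborel" and vb: "integrable lborel vb"
    and v_le: "\<And>s. norm (v s) \<le> vb s"
  defines "J s \<equiv> \<integral>r. indicator {s..t} r *\<^sub>R P (clamp T (t - r)) (Q (clamp T (r - s)) (v s)) \<partial>lborel"
  shows "conv_from T P a t (\<lambda>r. indicator {a..T} r *\<^sub>R conv_from T Q a r v)
      = (\<integral>s. indicator {a..t} s *\<^sub>R J s \<partial>lborel)"
    and "integrable lborel (\<lambda>s. indicator {a..t} s *\<^sub>R J s)"
proof -
  define \<Phi> where "\<Phi> r s = (indicator {a..T} r * indicator {a..r} s) *\<^sub>R Q (clamp T (r - s)) (v s)" for r s
  have [measurable]: "(\<lambda>z. Q (clamp T (fst z - snd z)) (v (snd z))) \<in> borel_measurable (lborel \<Otimes>\<^sub>M lborel)"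
    by (rule op_family_clamp_measurable[OF Q T]) measurable
  have \<Phi>_meas: "(\<lambda>z. \<Phi> (fst z) (snd z)) \<in> borel_measurable (lborel \<Otimes>\<^sub>M lborel)"
    unfolding \<Phi>_def by measurable
  have \<Phi>_le: "norm (\<Phi> r s) \<le> (indicator {0..T} (r - s) * cQ) * vb s" for r s
  proof (cases "r \<in> {a..T} \<and> s \<in> {a..r}")
    case True
    hence "r - s \<in> {0..T}" using a by auto
    moreover have "norm (Q (clamp T (r - s)) (v s)) \<le> cQ * vb s"
      by (rule order_trans[OF op_family_norm_le[OF Q clamp_in[OF T]] mult_left_mono[OF v_le cQ]])
    ultimately show ?thesis using True by (simp add: \<Phi>_def indicator_def)
  next
    case False
    have "0 \<le> vb s" using v_le[of s] norm_ge_zero order_trans by blast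
    thus ?thesis using False cQ by (auto simp: \<Phi>_def indicator_def)
  qed
  have J: "(\<integral>r. indicator {a..t} r *\<^sub>R P (clamp T (t - r)) (\<Phi> r s) \<partial>lborel) = indicator {a..t} s *\<^sub>R J s" for s
    unfolding J_def integral_scaleR_right[symmetric]
    by (rule Bochner_Integration.integral_cong[OF refl])
       (use t in \<open>auto simp: \<Phi>_def indicator_def op_family_scaleR[OF P clamp_in[OF T]]\<close>)
  have "conv_from T P a t (\<lambda>r. indicator {a..T} r *\<^sub>R conv_from T Q a r v)
      = (\<integral>r. indicator {a..t} r *\<^sub>R P (clamp T (t - r)) (\<integral>s. \<Phi> r s \<partial>lborel) \<partial>lborel)"
    unfolding conv_from_def \<Phi>_def by (simp add: scaleR_scaleR[symmetric] del: scaleR_scaleR)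
  also have "\<dots> = (\<integral>s. \<integral>r. indicator {a..t} r *\<^sub>R P (clamp T (t - r)) (\<Phi> r s) \<partial>lborel \<partial>lborel)"
    by (rule integral_op_Fubini(1)[OF P T cP \<Phi>_meas integrable_indicator_Icc_const vb \<Phi>_le])
  finally show "conv_from T P a t (\<lambda>r. indicator {a..T} r *\<^sub>R conv_from T Q a r v)
      = (\<integral>s. indicator {a..t} s *\<^sub>R J s \<partial>lborel)" by (simp add: J)
  show "integrable lborel (\<lambda>s. indicator {a..t} s *\<^sub>R J s)"
    using integral_op_Fubini(2)[OF P T cP \<Phi>_meas integrable_indicator_Icc_const vb \<Phi>_le, of a t]
    by (simp add: J)
qed

lemma clamped_integrand_integrable:
  fixes P :: "real \<Rightarrow> 'a::{banach,second_countable_topology} \<Rightarrow> 'a"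
  assumes P: "op_family T P c" and T: "0 \<le> T" and c: "0 \<le> c" and q: "continuous_on {0..T} q"
  shows "integrable lborel (\<lambda>s. indicator {a..b} s *\<^sub>R P (clamp T (t - s)) (q (clamp T s)))"
proof -
  obtain B where B: "\<forall>s\<in>{0..T}. norm (q s) \<le> B"
    using compact_imp_bounded[OF compact_continuous_image[OF q compact_Icc]] unfolding bounded_iff by auto
  have "continuous_on UNIV (\<lambda>s. q (clamp T s))"
    by (rule continuous_on_compose2[OF q continuous_on_clamp]) (use clamp_in[OF T] in auto)
  hence [measurable]: "(\<lambda>s. q (clamp T s)) \<in> borel_measurable borel"
    by (rule borel_measurable_continuous_onI)
  have [measurable]: "(\<lambda>s. P (clamp T (t - s)) (q (clamp T s))) \<in> borel_measurable lborel"
    using op_family_clamp_measurable[OF P T, of "\<lambda>s. t - s" lborel "\<lambda>s. q (clamp T s)"] by simp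
  show ?thesis
  proof (rule Bochner_Integration.integrable_bound[OF integrable_indicator_Icc_const[of a b "c * B"]])
    show "AE s in lborel. norm (indicator {a..b} s *\<^sub>R P (clamp T (t - s)) (q (clamp T s)))
        \<le> norm (indicator {a..b} s * (c * B))"
    proof (rule AE_I2)
      fix s
      have "norm (P (clamp T (t - s)) (q (clamp T s))) \<le> c * B"
        using op_family_norm_le[OF P clamp_in[OF T]] mult_left_mono[OF B[rule_format, OF clamp_in[OF T]] c]
        by (rule order_trans)
      thus "norm (indicator {a..b} s *\<^sub>R P (clamp T (t - s)) (q (clamp T s))) \<le> norm (indicator {a..b} s * (c * B))"
        by (auto simp: indicator_def)
    qed
  qed measurable
qed

lemma norm_conv_diff_le:
  fixes P :: "real \<Rightarrow> 'a::{banach,second_countable_topology} \<Rightarrow> 'a"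
  assumes P: "op_family T P c" and T: "0 \<le> T" and c: "0 \<le> c" and t: "t \<in> {0..T}"
    and Q: "continuous_on {0..T} (\<lambda>s. Q s x)" and Q': "continuous_on {0..T} (\<lambda>s. Q' s x)"
  shows "norm (conv P Q t x - conv P Q' t x) \<le> c * (\<integral>s. indicator {0..t} s * norm (Q s x - Q' s x) \<partial>lborel)"
proof -
  have clamped: "conv P Q t x = (\<integral>s. indicator {0..t} s *\<^sub>R P (clamp T (t - s)) (Q (clamp T s) x) \<partial>lborel)" for Q
    unfolding conv_def set_lebesgue_integral_def
    by (rule Bochner_Integration.integral_cong) (use t in \<open>auto simp: indicator_def\<close>)
  have "conv P Q t x - conv P Q' t x
      = (\<integral>s. indicator {0..t} s *\<^sub>R P (clamp T (t - s)) (Q (clamp T s) x - Q' (clamp T s) x) \<partial>lborel)"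
    unfolding clamped
    by (subst Bochner_Integration.integral_diff[symmetric,
          OF clamped_integrand_integrable[OF P T c Q] clamped_integrand_integrable[OF P T c Q']])
       (auto simp: op_family_diff[OF P clamp_in[OF T]] scaleR_diff_right)
  also have "norm \<dots> \<le> (\<integral>s. c * (indicator {0..t} s * norm (Q s x - Q' s x)) \<partial>lborel)"
  proof (rule norm_integral_le_integral)
    have "continuous_on {0..t} (\<lambda>s. norm (Q s x - Q' s x))"
      using Q Q' t by (auto intro!: continuous_intros intro: continuous_on_subset)
    thus "integrable lborel (\<lambda>s. c * (indicator {0..t} s * norm (Q s x - Q' s x)))"
      by (intro integrable_mult_right integrable_indicator_Icc_continuous)
    show "AE s in lborel. norm (indicator {0..t} s *\<^sub>R P (clamp T (t - s)) (Q (clamp T s) x - Q' (clamp T s) x))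
        \<le> c * (indicator {0..t} s * norm (Q s x - Q' s x))"
      using t by (intro AE_I2) (auto simp: indicator_def intro!: op_family_norm_le[OF P])
  qed
  finally show ?thesis by simp
qed


section \<open>Gronwall-type inequalities\<close>

lemma le_power_div_fact_imp_nonpos:
  fixes x M c :: real
  assumes "\<And>n. x \<le> M * c ^ n / fact n"
  shows "x \<le> 0"
proof (rule LIMSEQ_le_const)
  have "(\<lambda>n. M * (c ^ n /\<^sub>R fact n)) \<longlonglongrightarrow> M * 0"
    by (intro tendsto_mult tendsto_const summable_LIMSEQ_zero[OF summable_exp_generic])
  thus "(\<lambda>n. M * c ^ n / fact n) \<longlonglongrightarrow> 0" by (simp add: divide_inverse ac_simps)
qed (use assms in auto)

lemma gronwall_volterra_iterate:
  fixes f :: "real \<Rightarrow> real"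
  assumes fc: "continuous_on {0..T} f" and fB: "\<And>t. t \<in> {0..T} \<Longrightarrow> f t \<le> B" and L: "0 \<le> L"
    and ineq: "\<And>t. t \<in> {0<..T} \<Longrightarrow> f t \<le> L * (\<integral>s. indicator {0..t} s * f s \<partial>lborel)"
  shows "t \<in> {0<..T} \<Longrightarrow> f t \<le> B * (L * t) ^ n / fact n"
proof (induction n arbitrary: t)
  case 0
  thus ?case using fB by simp
next
  case (Suc n)
  let ?b = "\<lambda>s. B * L ^ n / fact n * (s - 0) ^ n"
  have "continuous_on {0..t} f" using fc Suc.prems by (auto intro: continuous_on_subset)
  hence "(\<integral>s. indicator {0..t} s * f s \<partial>lborel) \<le> (\<integral>s. indicator {0..t} s * ?b s \<partial>lborel)"
  proof (intro integral_mono_AE integrable_indicator_Icc_continuous continuous_intros)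
    show "AE s in lborel. indicator {0..t} s * f s \<le> indicator {0..t} s * ?b s"
      using AE_lborel_singleton[of 0]
    proof eventually_elim
      case (elim s)
      thus ?case
        using Suc.IH[of s] Suc.prems by (auto simp: indicator_def power_mult_distrib)
    qed
  qed
  also have "\<dots> = B * L ^ n / fact n * t ^ Suc n / Suc n"
    using integral_Icc_power[of 0 t] Suc.prems by simp
  finally have "f t \<le> L * (B * L ^ n / fact n * t ^ Suc n / Suc n)"
    using ineq[OF Suc.prems] L by (meson mult_left_mono order_trans)
  also have "\<dots> = B * (L * t) ^ Suc n / fact (Suc n)"
    by (simp add: power_mult_distrib field_simps del: of_nat_Suc)
  finally show ?case .
qed

lemma gronwall_volterra_zero:
  fixes f :: "real \<Rightarrow> real"
  assumes T: "T > 0" and fc: "continuous_on {0..T} f" and f0: "\<And>t. t \<in> {0..T} \<Longrightarrow> 0 \<le> f t"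
    and L: "0 \<le> L"
    and ineq: "\<And>t. t \<in> {0<..T} \<Longrightarrow> f t \<le> L * (\<integral>s. indicator {0..t} s * f s \<partial>lborel)"
    and t: "t \<in> {0..T}"
  shows "f t = 0"
proof -
  obtain tm where "tm \<in> {0..T}" and max: "\<And>s. s \<in> {0..T} \<Longrightarrow> f s \<le> f tm"
    using continuous_attains_sup[OF compact_Icc _ fc] T by auto
  have pos: "f s = 0" if s: "s \<in> {0<..T}" for s
    using le_power_div_fact_imp_nonpos[OF gronwall_volterra_iterate[OF fc max L ineq s]] f0 s
    by (auto simp: power_mult_distrib mult.assoc intro: antisym)
  have "(f \<longlongrightarrow> f 0) (at_right 0)" by (rule continuous_on_Icc_at_rightD[OF fc T])
  moreover have "eventually (\<lambda>s. f s = 0) (at_right 0)"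
    unfolding eventually_at_right_field using T pos by (intro exI[of _ T]) auto
  ultimately have "((\<lambda>_. 0) \<longlongrightarrow> f 0) (at_right (0::real))"
    by (rule Lim_transform_eventually)
  hence "f 0 = 0" by (simp add: tendsto_const_iff)
  thus ?thesis using pos t by (cases "t = 0") auto
qed

context
  fixes k \<phi> :: "real \<Rightarrow> real"
  assumes k_meas[measurable]: "k \<in> borel_measurable borel" and k_sq: "integrable lborel (\<lambda>s. (k s)^2)"
    and \<phi>_meas[measurable]: "\<phi> \<in> borel_measurable borel" and \<phi>_sq: "integrable lborel (\<lambda>s. (\<phi> s)^2)"
begin

lemma integrable_half_sum_sq_reflect: "integrable lborel (\<lambda>\<sigma>. ((k (s - \<sigma>))^2 + (\<phi> \<sigma>)^2) / 2)"
  using lborel_integrable_shift(2)[OF k_sq, of s] \<phi>_sq by simp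

lemma abs_conv_integrand_le: "indicator {a..s} \<sigma> * \<bar>k (s - \<sigma>)\<bar> * \<bar>\<phi> \<sigma>\<bar> \<le> ((k (s - \<sigma>))^2 + (\<phi> \<sigma>)^2) / 2"
proof -
  have "indicator {a..s} \<sigma> * \<bar>k (s - \<sigma>)\<bar> * \<bar>\<phi> \<sigma>\<bar> \<le> \<bar>k (s - \<sigma>)\<bar> * \<bar>\<phi> \<sigma>\<bar>"
    by (simp add: indicator_def)
  thus ?thesis using abs_mult_le_half_sum_sq[of "k (s - \<sigma>)" "\<phi> \<sigma>"] by linarith
qed

lemma integrable_abs_conv: "integrable lborel (\<lambda>\<sigma>. indicator {a..s} \<sigma> * \<bar>k (s - \<sigma>)\<bar> * \<bar>\<phi> \<sigma>\<bar>)"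
  by (rule Bochner_Integration.integrable_bound[OF integrable_half_sum_sq_reflect[of s]])
     (use abs_conv_integrand_le[of a s] in \<open>auto intro!: AE_I2 simp: abs_mult\<close>)

lemma abs_conv_le: "(\<integral>\<sigma>. indicator {a..s} \<sigma> * \<bar>k (s - \<sigma>)\<bar> * \<bar>\<phi> \<sigma>\<bar> \<partial>lborel)
    \<le> ((\<integral>s. (k s)^2 \<partial>lborel) + (\<integral>s. (\<phi> s)^2 \<partial>lborel)) / 2"
proof -
  have "(\<integral>\<sigma>. indicator {a..s} \<sigma> * \<bar>k (s - \<sigma>)\<bar> * \<bar>\<phi> \<sigma>\<bar> \<partial>lborel)
      \<le> (\<integral>\<sigma>. ((k (s - \<sigma>))^2 + (\<phi> \<sigma>)^2) / 2 \<partial>lborel)"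
    by (rule integral_mono[OF integrable_abs_conv integrable_half_sum_sq_reflect abs_conv_integrand_le])
  also have "\<dots> = ((\<integral>\<sigma>. (k (s - \<sigma>))^2 \<partial>lborel) + (\<integral>\<sigma>. (\<phi> \<sigma>)^2 \<partial>lborel)) / 2"
    using lborel_integrable_shift(2)[OF k_sq, of s] \<phi>_sq by simp
  also have "(\<integral>\<sigma>. (k (s - \<sigma>))^2 \<partial>lborel) = (\<integral>s. (k s)^2 \<partial>lborel)"
    using lborel_integral_reflect[of "\<lambda>r. (k r)^2" s] by simp
  finally show ?thesis .
qed

lemma abs_conv_measurable:
  "(\<lambda>s. \<integral>\<sigma>. indicator {a..s} \<sigma> * \<bar>k (s - \<sigma>)\<bar> * \<bar>\<phi> \<sigma>\<bar> \<partial>lborel) \<in> borel_measurable lborel"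
proof -
  have "(\<lambda>z. indicator {a..fst z} (snd z) * \<bar>k (fst z - snd z)\<bar> * \<bar>\<phi> (snd z)\<bar>) \<in> borel_measurable (lborel \<Otimes>\<^sub>M lborel)"
    by measurable
  thus ?thesis
    using lborel.borel_measurable_lebesgue_integral[of "\<lambda>s \<sigma>. indicator {a..s} \<sigma> * \<bar>k (s - \<sigma>)\<bar> * \<bar>\<phi> \<sigma>\<bar>" lborel]
    by (simp add: case_prod_beta')
qed

end

lemma abs_conv_le_of_AE_le:
  fixes k \<phi> :: "real \<Rightarrow> real"
  assumes k: "integrable lborel k"
    and \<psi>: "integrable lborel (\<lambda>\<sigma>. indicator {a..s} \<sigma> * \<bar>k (s - \<sigma>)\<bar> * \<phi> \<sigma>)"
    and le: "AE \<sigma> in lborel. \<sigma> \<in> {a..s} \<longrightarrow> \<phi> \<sigma> \<le> \<beta>" and \<beta>: "0 \<le> \<beta>"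
  shows "(\<integral>\<sigma>. indicator {a..s} \<sigma> * \<bar>k (s - \<sigma>)\<bar> * \<phi> \<sigma> \<partial>lborel) \<le> \<beta> * (\<integral>r. \<bar>k r\<bar> \<partial>lborel)"
proof -
  have k_reflect: "integrable lborel (\<lambda>\<sigma>. indicator {a..s} \<sigma> *\<^sub>R \<bar>k (s - \<sigma>)\<bar>)"
    by (intro integrable_mult_indicator lborel_integrable_shift(2) integrable_abs k) simp
  have "(\<integral>\<sigma>. indicator {a..s} \<sigma> * \<bar>k (s - \<sigma>)\<bar> * \<phi> \<sigma> \<partial>lborel)
      \<le> (\<integral>\<sigma>. \<beta> * (indicator {a..s} \<sigma> * \<bar>k (s - \<sigma>)\<bar>) \<partial>lborel)"
  proof (rule integral_mono_AE[OF \<psi>])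
    show "integrable lborel (\<lambda>\<sigma>. \<beta> * (indicator {a..s} \<sigma> * \<bar>k (s - \<sigma>)\<bar>))"
      using k_reflect by simp
    show "AE \<sigma> in lborel. indicator {a..s} \<sigma> * \<bar>k (s - \<sigma>)\<bar> * \<phi> \<sigma> \<le> \<beta> * (indicator {a..s} \<sigma> * \<bar>k (s - \<sigma>)\<bar>)"
      using le by eventually_elim (auto simp: indicator_def mult.commute[of \<beta>] intro: mult_left_mono)
  qed
  also have "\<dots> = \<beta> * (\<integral>\<sigma>. indicator {a..s} \<sigma> * \<bar>k (s - \<sigma>)\<bar> \<partial>lborel)" by simp
  also have "(\<integral>\<sigma>. indicator {a..s} \<sigma> * \<bar>k (s - \<sigma>)\<bar> \<partial>lborel) \<le> (\<integral>\<sigma>. \<bar>k (s - \<sigma>)\<bar> \<partial>lborel)"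
    using k_reflect lborel_integrable_shift(2)[OF integrable_abs[OF k], of s]
    by (intro integral_mono) (auto simp: indicator_def)
  hence "\<beta> * (\<integral>\<sigma>. indicator {a..s} \<sigma> * \<bar>k (s - \<sigma>)\<bar> \<partial>lborel) \<le> \<beta> * (\<integral>\<sigma>. \<bar>k (s - \<sigma>)\<bar> \<partial>lborel)"
    using \<beta> by (rule mult_left_mono)
  also have "(\<integral>\<sigma>. \<bar>k (s - \<sigma>)\<bar> \<partial>lborel) = (\<integral>r. \<bar>k r\<bar> \<partial>lborel)"
    using lborel_integral_reflect[of "\<lambda>r. \<bar>k r\<bar>" s] by simp
  finally show ?thesis .
qed

context
  fixes k \<phi> :: "real \<Rightarrow> real" and a T c L0 :: real
  assumes k: "integrable lborel k" and k_sq: "integrable lborel (\<lambda>s. (k s)^2)"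
    and \<phi>_meas[measurable]: "\<phi> \<in> borel_measurable borel" and \<phi>_nonneg: "\<And>t. 0 \<le> \<phi> t"
    and \<phi>_sq: "integrable lborel (\<lambda>s. (\<phi> s)^2)" and c: "0 \<le> c" and aT: "a \<le> T"
    and abs_conv_le_L0: "\<And>s. (\<integral>\<sigma>. indicator {a..s} \<sigma> * \<bar>k (s - \<sigma>)\<bar> * \<phi> \<sigma> \<partial>lborel) \<le> L0"
    and ineq: "AE t in lborel. t \<in> {a..T} \<longrightarrow>
      \<phi> t \<le> c * (\<integral>s. indicator {a..t} s * (\<integral>\<sigma>. indicator {a..s} \<sigma> * \<bar>k (s - \<sigma>)\<bar> * \<phi> \<sigma> \<partial>lborel) \<partial>lborel)"
begin

lemma abs_conv_bound_nonneg: "0 \<le> L0"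
proof -
  have "0 \<le> (\<integral>\<sigma>. indicator {a..a} \<sigma> * \<bar>k (a - \<sigma>)\<bar> * \<phi> \<sigma> \<partial>lborel)"
    by (rule integral_nonneg_AE) (use \<phi>_nonneg in auto)
  thus ?thesis using abs_conv_le_L0[of a] by linarith
qed

lemma integrable_abs_conv_nonneg: "integrable lborel (\<lambda>\<sigma>. indicator {a..s} \<sigma> * \<bar>k (s - \<sigma>)\<bar> * \<phi> \<sigma>)"
  using integrable_abs_conv[of k \<phi> a s] k k_sq \<phi>_sq \<phi>_nonneg by (simp add: borel_measurable_integrable)

lemma integral_abs_conv_mono:
  assumes "integrable lborel (\<lambda>s. indicator {a..t} s * \<beta> s)"
    and "\<And>s. s \<in> {a..t} \<Longrightarrow> (\<integral>\<sigma>. indicator {a..s} \<sigma> * \<bar>k (s - \<sigma>)\<bar> * \<phi> \<sigma> \<partial>lborel) \<le> \<beta> s"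
  shows "(\<integral>s. indicator {a..t} s * (\<integral>\<sigma>. indicator {a..s} \<sigma> * \<bar>k (s - \<sigma>)\<bar> * \<phi> \<sigma> \<partial>lborel) \<partial>lborel)
    \<le> (\<integral>s. indicator {a..t} s * \<beta> s \<partial>lborel)"
proof (rule integral_mono[OF _ assms(1)])
  have k_meas: "k \<in> borel_measurable borel" using k by (simp add: borel_measurable_integrable)
  have "(\<lambda>s. \<integral>\<sigma>. indicator {a..s} \<sigma> * \<bar>k (s - \<sigma>)\<bar> * \<phi> \<sigma> \<partial>lborel) \<in> borel_measurable lborel"
    using abs_conv_measurable[OF k_meas k_sq \<phi>_meas \<phi>_sq, of a] \<phi>_nonneg by simp
  moreover have "0 \<le> (\<integral>\<sigma>. indicator {a..s} \<sigma> * \<bar>k (s - \<sigma>)\<bar> * \<phi> \<sigma> \<partial>lborel)" for s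
    by (rule integral_nonneg_AE) (use \<phi>_nonneg in auto)
  ultimately show "integrable lborel (\<lambda>s. indicator {a..t} s * (\<integral>\<sigma>. indicator {a..s} \<sigma> * \<bar>k (s - \<sigma>)\<bar> * \<phi> \<sigma> \<partial>lborel))"
    by (intro Bochner_Integration.integrable_bound[OF integrable_indicator_Icc_const[of a t L0]])
       (use abs_conv_le_L0 in \<open>auto intro!: AE_I2 intro: order_trans[OF _ abs_ge_self] simp: indicator_def\<close>)
qed (use assms(2) in \<open>auto simp: indicator_def\<close>)

lemma gronwall_double_AE_base: "AE t in lborel. t \<in> {a..T} \<longrightarrow> \<phi> t \<le> c * (T - a) * L0"
  using ineq
proof eventually_elim
  case (elim t)
  show ?case
  proof
    assume t: "t \<in> {a..T}"
    have "(\<integral>s. indicator {a..t} s * (\<integral>\<sigma>. indicator {a..s} \<sigma> * \<bar>k (s - \<sigma>)\<bar> * \<phi> \<sigma> \<partial>lborel) \<partial>lborel)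
        \<le> (\<integral>s. indicator {a..t} s * L0 \<partial>lborel)"
      by (rule integral_abs_conv_mono[OF integrable_indicator_Icc_const abs_conv_le_L0])
    also have "\<dots> \<le> (T - a) * L0" using t abs_conv_bound_nonneg by (simp add: emeasure_lborel_Icc_eq mult_right_mono)
    finally show "\<phi> t \<le> c * (T - a) * L0" using elim t c by (simp add: mult.assoc) (meson mult_left_mono order_trans)
  qed
qed

lemma gronwall_double_AE_step:
  assumes C: "0 \<le> C" and IH: "AE t in lborel. t \<in> {a..T} \<longrightarrow> \<phi> t \<le> C * (t - a) ^ n"
  shows "AE t in lborel. t \<in> {a..T} \<longrightarrow>
    \<phi> t \<le> c * (C * (\<integral>r. \<bar>k r\<bar> \<partial>lborel) * (t - a) ^ Suc n / Suc n)"
  using ineq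
proof eventually_elim
  case (elim t)
  let ?kn = "\<integral>r. \<bar>k r\<bar> \<partial>lborel"
  have \<psi>_le: "(\<integral>\<sigma>. indicator {a..s} \<sigma> * \<bar>k (s - \<sigma>)\<bar> * \<phi> \<sigma> \<partial>lborel) \<le> C * ?kn * (s - a) ^ n"
    if s: "s \<in> {a..T}" for s
  proof -
    have "AE \<sigma> in lborel. \<sigma> \<in> {a..s} \<longrightarrow> \<phi> \<sigma> \<le> C * (s - a) ^ n"
    proof (rule AE_mp[OF IH], intro AE_I2 impI)
      fix \<sigma> assume "\<sigma> \<in> {a..T} \<longrightarrow> \<phi> \<sigma> \<le> C * (\<sigma> - a) ^ n" "\<sigma> \<in> {a..s}"
      moreover have "C * (\<sigma> - a) ^ n \<le> C * (s - a) ^ n" if "\<sigma> \<in> {a..s}"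
        using that C by (intro mult_left_mono power_mono) auto
      ultimately show "\<phi> \<sigma> \<le> C * (s - a) ^ n" using s by auto
    qed
    from abs_conv_le_of_AE_le[OF k integrable_abs_conv_nonneg this] s C
    show ?thesis by (simp add: ac_simps)
  qed
  show ?case
  proof
    assume t: "t \<in> {a..T}"
    have "(\<integral>s. indicator {a..t} s * (\<integral>\<sigma>. indicator {a..s} \<sigma> * \<bar>k (s - \<sigma>)\<bar> * \<phi> \<sigma> \<partial>lborel) \<partial>lborel)
        \<le> (\<integral>s. indicator {a..t} s * (C * ?kn * (s - a) ^ n) \<partial>lborel)"
      by (rule integral_abs_conv_mono) (use t \<psi>_le in \<open>auto intro!: integrable_indicator_Icc_continuous continuous_intros\<close>)
    also have "\<dots> = C * ?kn * (t - a) ^ Suc n / Suc n" using integral_Icc_power t by auto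
    finally show "\<phi> t \<le> c * (C * ?kn * (t - a) ^ Suc n / Suc n)"
      using elim t c by (meson mult_left_mono order_trans)
  qed
qed

lemma gronwall_double_AE_iterate:
  "AE t in lborel. t \<in> {a..T} \<longrightarrow>
     \<phi> t \<le> c * (T - a) * L0 * (c * (\<integral>r. \<bar>k r\<bar> \<partial>lborel)) ^ n / fact n * (t - a) ^ n"
proof (induction n)
  case 0
  show ?case using gronwall_double_AE_base by simp
next
  case (Suc n)
  let ?C = "c * (T - a) * L0 * (c * (\<integral>r. \<bar>k r\<bar> \<partial>lborel)) ^ n / fact n"
  have "0 \<le> ?C" using c aT abs_conv_bound_nonneg by simp
  from gronwall_double_AE_step[OF this Suc.IH]
  show ?case by eventually_elim (simp add: field_simps del: of_nat_Suc)
qed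

lemma gronwall_double_AE_zero: "AE t in lborel. t \<in> {a..T} \<longrightarrow> \<phi> t = 0"
proof -
  have "AE t in lborel. \<forall>n. t \<in> {a..T} \<longrightarrow>
      \<phi> t \<le> c * (T - a) * L0 * (c * (\<integral>r. \<bar>k r\<bar> \<partial>lborel)) ^ n / fact n * (t - a) ^ n"
    unfolding AE_all_countable using gronwall_double_AE_iterate by blast
  thus ?thesis
  proof eventually_elim
    case (elim t)
    show ?case
    proof
      assume t: "t \<in> {a..T}"
      have "\<phi> t \<le> 0"
        by (rule le_power_div_fact_imp_nonpos[where M="c * (T - a) * L0" and c="c * (\<integral>r. \<bar>k r\<bar> \<partial>lborel) * (t - a)"])
           (use elim t in \<open>simp add: power_mult_distrib ac_simps\<close>)
      thus "\<phi> t = 0" using \<phi>_nonneg[of t] by linarith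
    qed
  qed
qed

end

section \<open>The resolvent of the Volterra equation\<close>

locale kernel_semigroup =
  fixes S :: "real \<Rightarrow> 'h::{banach,second_countable_topology} \<Rightarrow> 'h" and K :: "real \<Rightarrow> real"
    and T C \<omega> :: real
  assumes Tpos: "T > 0" and semigroup: "C0_semigroup S"
    and Sbd: "\<forall>t\<ge>0. \<forall>x. norm (S t x) \<le> C * exp (\<omega> * t) * norm x"
    and KL2: "L2_on {0..T} K"
begin

definition "cS = \<bar>C\<bar> * exp (\<bar>\<omega>\<bar> * T)"
definition "K0 s = indicator {0..T} s * K s"
definition "K_L1 = (\<integral>s. \<bar>K0 s\<bar> \<partial>lborel)"
definition "cmu = cS * K_L1"

lemma T_nonneg: "0 \<le> T" using Tpos by simp
lemma cS_nonneg: "0 \<le> cS" by (simp add: cS_def)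
lemma K_L1_nonneg: "0 \<le> K_L1" by (simp add: K_L1_def)
lemma cmu_nonneg: "0 \<le> cmu" by (simp add: cmu_def cS_nonneg K_L1_nonneg)

lemma S_bounded_linear: "t \<ge> 0 \<Longrightarrow> bounded_linear (S t)"
  using semigroup by (auto simp: C0_semigroup_def)

lemma S_add: "s \<ge> 0 \<Longrightarrow> t \<ge> 0 \<Longrightarrow> S (s + t) x = S s (S t x)"
  using semigroup by (auto simp: C0_semigroup_def)

lemma norm_S_le: assumes "t \<in> {0..T}" shows "norm (S t x) \<le> cS * norm x"
proof -
  have "\<omega> * t \<le> \<bar>\<omega>\<bar> * t" using assms by (intro mult_right_mono) auto
  also have "\<dots> \<le> \<bar>\<omega>\<bar> * T" using assms by (intro mult_left_mono) auto
  finally have "C * exp (\<omega> * t) \<le> cS" unfolding cS_def by (intro mult_mono) auto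
  moreover have "norm (S t x) \<le> C * exp (\<omega> * t) * norm x" using Sbd assms by auto
  ultimately show ?thesis by (meson mult_right_mono norm_ge_zero order_trans)
qed

lemma continuous_on_S: "continuous_on {0..T} (\<lambda>r. S r x)"
  unfolding continuous_on_iff
proof (intro ballI allI impI)
  fix r0 e assume r0: "r0 \<in> {0..T}" and e: "(0::real) < e"
  define e' where "e' = e / (cS + 1)"
  have e': "e' > 0" using e cS_nonneg by (simp add: e'_def)
  have "((\<lambda>t. S t x) \<longlongrightarrow> x) (at_right 0)" using semigroup by (auto simp: C0_semigroup_def)
  hence "eventually (\<lambda>t. dist (S t x) x < e') (at_right 0)" using e' by (rule tendstoD)
  then obtain b where b: "b > 0" "\<And>y. y > 0 \<Longrightarrow> y < b \<Longrightarrow> dist (S y x) x < e'"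
    unfolding eventually_at_right_field by auto
  have ce: "cS * e' < e" using e cS_nonneg unfolding e'_def by (simp add: field_simps)
  show "\<exists>d>0. \<forall>r\<in>{0..T}. dist r r0 < d \<longrightarrow> dist (S r x) (S r0 x) < e"
  proof (intro exI[of _ b] conjI ballI impI b(1))
    fix r assume r: "r \<in> {0..T}" and d: "dist r r0 < b"
    consider "r = r0" | "r > r0" | "r < r0" by linarith
    thus "dist (S r x) (S r0 x) < e"
    proof cases
      case 1 thus ?thesis using e by simp
    next
      case 2
      have eq: "S r x = S r0 (S (r - r0) x)" using S_add[of r0 "r - r0" x] r0 2 by auto
      have "S r x - S r0 x = S r0 (S (r - r0) x - x)"
        unfolding eq using linear_diff[OF bounded_linear.linear[OF S_bounded_linear[of r0]]] r0 by auto
      hence "dist (S r x) (S r0 x) = norm (S r0 (S (r - r0) x - x))" by (simp add: dist_norm)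
      also have "\<dots> \<le> cS * norm (S (r - r0) x - x)" using norm_S_le r0 by blast
      also have "\<dots> \<le> cS * e'"
        using b(2)[of "r - r0"] 2 d cS_nonneg by (intro mult_left_mono) (auto simp: dist_norm)
      finally show ?thesis using ce by simp
    next
      case 3
      have eq: "S r0 x = S r (S (r0 - r) x)" using S_add[of r "r0 - r" x] r 3 by auto
      have "S r x - S r0 x = S r (x - S (r0 - r) x)"
        unfolding eq using linear_diff[OF bounded_linear.linear[OF S_bounded_linear[of r]]] r by auto
      hence "dist (S r x) (S r0 x) = norm (S r (x - S (r0 - r) x))" by (simp add: dist_norm)
      also have "\<dots> \<le> cS * norm (x - S (r0 - r) x)" using norm_S_le r by blast
      also have "\<dots> \<le> cS * e'"
        using b(2)[of "r0 - r"] 3 d cS_nonneg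
        by (intro mult_left_mono) (auto simp: dist_norm norm_minus_commute dist_commute)
      finally show ?thesis using ce by simp
    qed
  qed
qed

lemma op_family_S: "op_family T S cS"
  unfolding op_family_def using S_bounded_linear continuous_on_S norm_S_le by auto


lemma S_clamp_measurable[measurable]:
  "a \<in> borel_measurable M \<Longrightarrow> b \<in> borel_measurable M \<Longrightarrow> (\<lambda>w. S (clamp T (a w)) (b w)) \<in> borel_measurable M"
  using op_family_clamp_measurable[OF op_family_S T_nonneg] by auto

lemma K0_measurable[measurable]: "K0 \<in> borel_measurable borel"
  using L2_on_indicator(1)[OF KL2] by (simp add: K0_def[abs_def])

lemma integrable_K0_sq: "integrable lborel (\<lambda>s. (K0 s)^2)"
  using L2_on_indicator(2)[OF KL2] by (simp add: K0_def[abs_def])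

lemma integrable_abs_K0: "integrable lborel (\<lambda>s. \<bar>K0 s\<bar>)"
  using L2_on_indicator(3)[OF KL2] by (simp add: K0_def[abs_def] abs_mult)

lemma integrable_K0: "integrable lborel K0"
  using integrable_abs_K0 by (simp add: integrable_abs_iff)

lemma mu_eq_clamped: "t \<in> {0..T} \<Longrightarrow> mu S K t x = (\<integral>s. (indicator {0..t} s * K0 s) *\<^sub>R S (clamp T (t - s)) x \<partial>lborel)"
  unfolding mu_def set_lebesgue_integral_def
  by (rule Bochner_Integration.integral_cong) (auto simp: indicator_def K0_def)

lemma norm_mu_integrand_le:
  "norm ((indicator {0..t} s * K0 s) *\<^sub>R S (clamp T (t - s)) x) \<le> \<bar>K0 s\<bar> * (cS * norm x)"
proof -
  have "norm (S (clamp T (t - s)) x) \<le> cS * norm x" using norm_S_le[OF clamp_in[OF T_nonneg]] .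
  hence "indicator {0..t} s * \<bar>K0 s\<bar> * norm (S (clamp T (t - s)) x) \<le> 1 * \<bar>K0 s\<bar> * (cS * norm x)"
    by (intro mult_mono) (auto simp: indicator_def)
  thus ?thesis by (simp add: abs_mult)
qed

lemma mu_integrand_integrable: "integrable lborel (\<lambda>s. (indicator {0..t} s * K0 s) *\<^sub>R S (clamp T (t - s)) x)"
proof (rule Bochner_Integration.integrable_bound[OF integrable_mult_left[OF integrable_abs_K0]])
  show "(\<lambda>s. (indicator {0..t} s * K0 s) *\<^sub>R S (clamp T (t - s)) x) \<in> borel_measurable lborel"
    by measurable
  show "AE s in lborel. norm ((indicator {0..t} s * K0 s) *\<^sub>R S (clamp T (t - s)) x)
      \<le> norm (\<bar>K0 s\<bar> * (cS * norm x))"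
    by (intro AE_I2 order_trans[OF norm_mu_integrand_le]) (metis abs_ge_self real_norm_def)
qed

lemma norm_mu_le: assumes t: "t \<in> {0..T}" shows "norm (mu S K t x) \<le> cmu * norm x"
proof -
  have "norm (mu S K t x) \<le> (\<integral>s. \<bar>K0 s\<bar> * (cS * norm x) \<partial>lborel)"
    unfolding mu_eq_clamped[OF t]
    by (rule norm_integral_le_integral[OF integrable_mult_left[OF integrable_abs_K0]], rule AE_I2)
       (rule norm_mu_integrand_le)
  also have "\<dots> = cmu * norm x" by (simp add: cmu_def K_L1_def)
  finally show ?thesis .
qed

lemma continuous_on_mu: "continuous_on {0..T} (\<lambda>t. mu S K t x)"
proof -
  have "continuous_on {0..T} (\<lambda>t. \<integral>s. (indicator {0..t} s * K0 s) *\<^sub>R S (clamp T (t - s)) x \<partial>lborel)"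
  proof (rule continuous_on_parametric_integral[OF integrable_K0, where Bd="cS * norm x"])
    show "continuous_on {0..T} (\<lambda>t. S (clamp T (t - s)) x)" for s
      by (rule op_family_clamp_continuous[OF op_family_S T_nonneg]) (auto intro: continuous_intros)
    show "norm (S (clamp T (t - s)) x) \<le> cS * norm x" for t s
      using norm_S_le[OF clamp_in[OF T_nonneg]] .
  qed measurable
  thus ?thesis by (rule continuous_on_cong[THEN iffD1, rotated -1]) (auto simp: mu_eq_clamped)
qed

lemma op_family_mu: "op_family T (mu S K) cmu"
proof (rule op_family_intro)
  fix t x y assume t: "t \<in> {0..T}"
  show "mu S K t (x + y) = mu S K t x + mu S K t y"
    unfolding mu_eq_clamped[OF t]
    by (subst Bochner_Integration.integral_add[symmetric, OF mu_integrand_integrable mu_integrand_integrable],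
        rule Bochner_Integration.integral_cong)
       (auto simp: op_family_add[OF op_family_S clamp_in[OF T_nonneg]] scaleR_add_right)
next
  fix t a x assume t: "t \<in> {0..T}"
  show "mu S K t (a *\<^sub>R x) = a *\<^sub>R mu S K t x"
    unfolding mu_eq_clamped[OF t]
    by (subst integral_scaleR_right[symmetric], rule Bochner_Integration.integral_cong)
       (auto simp: op_family_scaleR[OF op_family_S clamp_in[OF T_nonneg]])
qed (use norm_mu_le continuous_on_mu in auto)

lemma mu_clamp_measurable[measurable]:
  "a \<in> borel_measurable M \<Longrightarrow> b \<in> borel_measurable M \<Longrightarrow> (\<lambda>w. mu S K (clamp T (a w)) (b w)) \<in> borel_measurable M"
  using op_family_clamp_measurable[OF op_family_mu T_nonneg] by auto

definition "mu_pow_bnd n = cmu ^ Suc n * T ^ n / fact n"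
definition "cR = suminf mu_pow_bnd"

lemma mu_pow_bnd_nonneg: "0 \<le> mu_pow_bnd n" using cmu_nonneg Tpos by (simp add: mu_pow_bnd_def)

lemma summable_mu_pow_bnd: "summable mu_pow_bnd"
proof -
  have "summable (\<lambda>n. cmu * ((cmu * T) ^ n /\<^sub>R fact n))"
    by (intro summable_mult summable_exp_generic)
  also have "(\<lambda>n. cmu * ((cmu * T) ^ n /\<^sub>R fact n)) = mu_pow_bnd"
    by (rule ext) (simp add: mu_pow_bnd_def field_simps power_mult_distrib)
  finally show ?thesis .
qed

lemma cR_nonneg: "0 \<le> cR"
  unfolding cR_def using summable_mu_pow_bnd mu_pow_bnd_nonneg by (simp add: suminf_nonneg)

lemma mu_pow_bounds:
  "op_family T (mu_pow S K n) (mu_pow_bnd n) \<and>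
   (\<forall>t\<in>{0..T}. \<forall>x. norm (mu_pow S K n t x) \<le> cmu ^ Suc n * t ^ n / fact n * norm x)"
proof (induction n)
  case 0
  show ?case using op_family_mu norm_mu_le by (simp add: mu_pow_bnd_def)
next
  case (Suc n)
  have IH: "op_family T (mu_pow S K n) (mu_pow_bnd n)" using Suc.IH by blast
  have sharp: "norm (mu_pow S K (Suc n) t x) \<le> cmu ^ Suc (Suc n) * t ^ Suc n / fact (Suc n) * norm x"
    if t: "t \<in> {0..T}" for t x
  proof -
    have "norm (conv (mu S K) (mu_pow S K n) t x)
        \<le> cmu * (\<integral>s. indicator {0..t} s * (cmu ^ Suc n / fact n * (s - 0) ^ n) \<partial>lborel) * norm x"
      by (rule norm_conv_le[OF op_family_mu IH T_nonneg cmu_nonneg mu_pow_bnd_nonneg t])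
         (use Suc.IH in \<open>auto intro!: continuous_intros\<close>)
    also have "\<dots> = cmu * (cmu ^ Suc n / fact n * t ^ Suc n / Suc n) * norm x"
      using integral_Icc_power[of 0 t "cmu ^ Suc n / fact n" n] t by simp
    also have "\<dots> = cmu ^ Suc (Suc n) * t ^ Suc n / fact (Suc n) * norm x"
      by (simp add: field_simps del: of_nat_Suc)
    finally show ?thesis by simp
  qed
  have "op_family T (mu_pow S K (Suc n)) (mu_pow_bnd (Suc n))"
  proof (rule op_family_mono[OF op_family_conv[OF op_family_mu IH T_nonneg cmu_nonneg mu_pow_bnd_nonneg,
        folded mu_pow.simps(2)]])
    fix r x assume r: "r \<in> {0..T}"
    have "cmu ^ Suc (Suc n) * r ^ Suc n / fact (Suc n) \<le> mu_pow_bnd (Suc n)"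
      unfolding mu_pow_bnd_def using r cmu_nonneg
      by (intro divide_right_mono mult_left_mono power_mono) auto
    thus "norm (mu_pow S K (Suc n) r x) \<le> mu_pow_bnd (Suc n) * norm x"
      using sharp[OF r, of x] by (meson mult_right_mono norm_ge_zero order_trans)
  qed
  thus ?case using sharp by blast
qed

lemma op_family_mu_pow: "op_family T (mu_pow S K n) (mu_pow_bnd n)"
  using mu_pow_bounds by blast

lemma norm_mu_pow_le: "t \<in> {0..T} \<Longrightarrow> norm (mu_pow S K n t x) \<le> mu_pow_bnd n * norm x"
  using op_family_norm_le[OF op_family_mu_pow] .

lemma summable_mu_pow: "t \<in> {0..T} \<Longrightarrow> summable (\<lambda>n. mu_pow S K n t x)"
  by (rule summable_comparison_test'[where g="\<lambda>n. mu_pow_bnd n * norm x" and N=0])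
     (auto intro: summable_mult2 summable_mu_pow_bnd norm_mu_pow_le)

lemma norm_Rres_le: assumes t: "t \<in> {0..T}" shows "norm (Rres S K t x) \<le> cR * norm x"
proof -
  have "norm (Rres S K t x) = norm (\<Sum>n. mu_pow S K n t x)" by (simp add: Rres_def)
  also have "\<dots> \<le> (\<Sum>n. mu_pow_bnd n * norm x)"
    by (rule norm_suminf_le) (auto intro: summable_mult2 summable_mu_pow_bnd norm_mu_pow_le[OF t])
  also have "\<dots> = cR * norm x" unfolding cR_def by (rule suminf_mult2[symmetric, OF summable_mu_pow_bnd])
  finally show ?thesis .
qed

lemma continuous_on_Rres: "continuous_on {0..T} (\<lambda>t. Rres S K t x)"
proof -
  have ul: "uniform_limit {0..T} (\<lambda>N t. \<Sum>n<N. mu_pow S K n t x) (\<lambda>t. \<Sum>n. mu_pow S K n t x) sequentially"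
    by (rule Weierstrass_m_test[where M="\<lambda>n. mu_pow_bnd n * norm x"])
       (auto intro: summable_mult2 summable_mu_pow_bnd norm_mu_pow_le)
  have "continuous_on {0..T} (\<lambda>t. \<Sum>n. mu_pow S K n t x)"
  proof (rule uniform_limit_theorem[OF _ ul])
    show "\<forall>\<^sub>F N in sequentially. continuous_on {0..T} (\<lambda>t. \<Sum>n<N. mu_pow S K n t x)"
      by (intro always_eventually allI continuous_on_sum op_family_continuous[OF op_family_mu_pow])
  qed simp
  thus ?thesis unfolding Rres_def by (intro continuous_on_minus)
qed

lemma op_family_Rres: "op_family T (Rres S K) cR"
proof (rule op_family_intro)
  fix t x y assume t: "t \<in> {0..T}"
  have "(\<Sum>n. mu_pow S K n t (x + y)) = (\<Sum>n. mu_pow S K n t x + mu_pow S K n t y)"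
    using op_family_add[OF op_family_mu_pow t] by simp
  also have "\<dots> = (\<Sum>n. mu_pow S K n t x) + (\<Sum>n. mu_pow S K n t y)"
    by (rule suminf_add[symmetric]) (auto intro: summable_mu_pow[OF t])
  finally show "Rres S K t (x + y) = Rres S K t x + Rres S K t y" by (simp add: Rres_def)
next
  fix t a x assume t: "t \<in> {0..T}"
  have "(\<Sum>n. mu_pow S K n t (a *\<^sub>R x)) = (\<Sum>n. a *\<^sub>R mu_pow S K n t x)"
    using op_family_scaleR[OF op_family_mu_pow t] by simp
  also have "\<dots> = a *\<^sub>R (\<Sum>n. mu_pow S K n t x)"
    by (rule suminf_scaleR_right[symmetric]) (auto intro: summable_mu_pow[OF t])
  finally show "Rres S K t (a *\<^sub>R x) = a *\<^sub>R Rres S K t x" by (simp add: Rres_def)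
qed (use norm_Rres_le continuous_on_Rres in auto)

lemma conv_mu_Rres:
  assumes t: "t \<in> {0..T}"
  shows "conv (mu S K) (Rres S K) t x = - (\<Sum>n. mu_pow S K (Suc n) t x)"
proof -
  define F where "F n s = indicator {0..t} s *\<^sub>R mu S K (clamp T (t - s)) (mu_pow S K n (clamp T s) x)" for n s
  have F_int: "integrable lborel (F n)" for n
    unfolding F_def[abs_def]
    by (rule conv_integrand_integrable[OF op_family_mu op_family_mu_pow T_nonneg cmu_nonneg mu_pow_bnd_nonneg])
  have F_le: "norm (F n s) \<le> indicator {0..t} s * (cmu * norm x * mu_pow_bnd n)" for n s
  proof -
    have "norm (mu S K (clamp T (t - s)) (mu_pow S K n (clamp T s) x)) \<le> cmu * norm (mu_pow S K n (clamp T s) x)"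
      by (rule op_family_norm_le[OF op_family_mu clamp_in[OF T_nonneg]])
    also have "\<dots> \<le> cmu * (mu_pow_bnd n * norm x)"
      by (rule mult_left_mono[OF norm_mu_pow_le[OF clamp_in[OF T_nonneg]] cmu_nonneg])
    finally show ?thesis by (simp add: F_def indicator_def ac_simps)
  qed
  have series: "indicator {0..t} s *\<^sub>R mu S K (clamp T (t - s)) (Rres S K (clamp T s) x) = - (\<Sum>n. F n s)" for s
  proof -
    have bl: "bounded_linear (mu S K (clamp T (t - s)))"
      by (rule op_family_bounded_linear[OF op_family_mu clamp_in[OF T_nonneg]])
    have sm: "summable (\<lambda>n. mu_pow S K n (clamp T s) x)" by (rule summable_mu_pow[OF clamp_in[OF T_nonneg]])
    show ?thesis
      unfolding F_def Rres_def
      by (simp add: bounded_linear.suminf[OF bl sm] op_family_minus[OF op_family_mu clamp_in[OF T_nonneg]]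
                    suminf_scaleR_right[OF bounded_linear.summable[OF bl sm]])
  qed
  have F_eq: "(\<integral>s. F n s \<partial>lborel) = mu_pow S K (Suc n) t x" for n
    unfolding F_def mu_pow.simps
      conv_eq_clamped[OF op_family_mu op_family_mu_pow T_nonneg cmu_nonneg mu_pow_bnd_nonneg t] ..
  have "conv (mu S K) (Rres S K) t x = - (\<integral>s. (\<Sum>n. F n s) \<partial>lborel)"
    unfolding conv_eq_clamped[OF op_family_mu op_family_Rres T_nonneg cmu_nonneg cR_nonneg t] series by simp
  also have "(\<integral>s. (\<Sum>n. F n s) \<partial>lborel) = (\<Sum>n. \<integral>s. F n s \<partial>lborel)"
    by (rule integral_suminf_dominated[OF F_int _ F_le])
       (use t cmu_nonneg mu_pow_bnd_nonneg summable_mu_pow_bnd in \<open>auto intro: summable_mult\<close>)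
  finally show ?thesis by (simp add: F_eq)
qed

lemma Rres_volterra_eq:
  assumes t: "t \<in> {0..T}"
  shows "Rres S K t x - conv (mu S K) (Rres S K) t x = - mu S K t x"
  using suminf_split_head[OF summable_mu_pow[OF t]] by (simp add: conv_mu_Rres[OF t] Rres_def)

lemma Rres_volterra_sol: "volterra_sol S K T (Rres S K)"
  unfolding volterra_sol_def
  using op_family_bounded_linear[OF op_family_Rres] continuous_on_Rres Rres_volterra_eq by auto

lemma volterra_sol_unique:
  assumes V: "volterra_sol S K T R'" and t: "t \<in> {0..T}"
  shows "R' t = Rres S K t"
proof
  fix x
  have R'_cont: "continuous_on {0..T} (\<lambda>s. R' s x)"
    and R'_eq: "\<And>s. s \<in> {0<..T} \<Longrightarrow> R' s x - conv (mu S K) R' s x = - mu S K s x"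
    using V unfolding volterra_sol_def by auto
  define D where "D s = norm (R' s x - Rres S K s x)" for s
  have "D s \<le> cmu * (\<integral>r. indicator {0..s} r * D r \<partial>lborel)" if s: "s \<in> {0<..T}" for s
  proof -
    have "R' s x - Rres S K s x = (R' s x - conv (mu S K) R' s x)
        - (Rres S K s x - conv (mu S K) (Rres S K) s x) + (conv (mu S K) R' s x - conv (mu S K) (Rres S K) s x)"
      by (simp add: algebra_simps)
    also have "\<dots> = conv (mu S K) R' s x - conv (mu S K) (Rres S K) s x"
      using R'_eq[OF s] Rres_volterra_eq[of s x] s by simp
    finally have "R' s x - Rres S K s x = conv (mu S K) R' s x - conv (mu S K) (Rres S K) s x" .
    thus ?thesis unfolding D_def
      using norm_conv_diff_le[where Q=R' and Q'="Rres S K" and x=x, OF op_family_mu T_nonneg cmu_nonneg _ R'_cont continuous_on_Rres] s by simp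
  qed
  moreover have "continuous_on {0..T} D"
    unfolding D_def by (intro continuous_intros R'_cont continuous_on_Rres)
  ultimately have "D t = 0"
    by (intro gronwall_volterra_zero[OF Tpos _ _ cmu_nonneg _ t]) (auto simp: D_def)
  thus "R' t x = Rres S K t x" by (simp add: D_def)
qed

end

section \<open>The solution formula\<close>

locale mild_problem = kernel_semigroup S K T C \<omega>
  for S :: "real \<Rightarrow> 'h::{banach,second_countable_topology} \<Rightarrow> 'h" and K T C \<omega> +
  fixes \<tau> :: real and \<xi> :: "real \<Rightarrow> 'h" and u :: "real \<Rightarrow> 'u::{banach,second_countable_topology}"
    and B :: "'u \<Rightarrow> 'h" and \<xi>0 :: 'h
  assumes tau: "\<tau> \<in> {0<..<T}" and xiL2: "L2_on {0..\<tau>} \<xi>" and uL2: "L2_on {\<tau>..T} u"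
    and Bbl: "bounded_linear B"
begin

abbreviation "memory_term w t \<equiv> set_lebesgue_integral lborel {\<tau>..t}
  (\<lambda>s. S (t - s) (set_lebesgue_integral lborel {\<tau>..s} (\<lambda>\<sigma>. K (s - \<sigma>) *\<^sub>R w \<sigma>)))"

(* The suffix z marks extension by zero outside the interval on which a function is given. *)
definition "\<xi>z s = indicator {0..\<tau>} s *\<^sub>R \<xi> s"
definition "uz s = indicator {\<tau>..T} s *\<^sub>R u s"
definition "Bu s = B (uz s)"
definition "nB = onorm B"
definition "hist s = (\<integral>\<sigma>. K0 (s - \<sigma>) *\<^sub>R \<xi>z \<sigma> \<partial>lborel)"
definition "hist_z s = indicator {\<tau>..T} s *\<^sub>R hist s"
definition "c_hist = ((\<integral>s. (K0 s)^2 \<partial>lborel) + (\<integral>s. (norm (\<xi>z s))^2 \<partial>lborel)) / 2"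

lemma xiz_measurable[measurable]: "\<xi>z \<in> borel_measurable lborel"
  using L2_on_indicator(1)[OF xiL2] by (simp add: \<xi>z_def[abs_def])
lemma integrable_xiz_sq: "integrable lborel (\<lambda>s. (norm (\<xi>z s))^2)"
  using L2_on_indicator(2)[OF xiL2] by (simp add: \<xi>z_def[abs_def])
lemma integrable_xiz: "integrable lborel (\<lambda>s. norm (\<xi>z s))"
  using L2_on_indicator(3)[OF xiL2] by (simp add: \<xi>z_def[abs_def])
lemma uz_measurable[measurable]: "uz \<in> borel_measurable lborel"
  using L2_on_indicator(1)[OF uL2] by (simp add: uz_def[abs_def])
lemma integrable_uz: "integrable lborel (\<lambda>s. norm (uz s))"
  using L2_on_indicator(3)[OF uL2] by (simp add: uz_def[abs_def])

lemma norm_B_le: "norm (B x) \<le> nB * norm x" unfolding nB_def by (rule onorm[OF Bbl])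

lemma Bu_measurable[measurable]: "Bu \<in> borel_measurable lborel"
proof -
  have "B \<in> borel_measurable borel"
    by (rule borel_measurable_continuous_onI) (simp add: linear_continuous_on[OF Bbl])
  thus ?thesis unfolding Bu_def[abs_def] by measurable
qed
lemma norm_Bu_le: "norm (Bu s) \<le> nB * norm (uz s)" unfolding Bu_def by (rule norm_B_le)
lemma integrable_Bu_bnd: "integrable lborel (\<lambda>s. nB * norm (uz s))" using integrable_uz by simp

lemma hist_integrand_measurable[measurable]: "(\<lambda>z. K0 (fst z - snd z) *\<^sub>R \<xi>z (snd z)) \<in> borel_measurable (lborel \<Otimes>\<^sub>M lborel)"
  by measurable

lemma hist_measurable[measurable]: "hist \<in> borel_measurable lborel"
  using lborel.borel_measurable_lebesgue_integral[of "\<lambda>s \<sigma>. K0 (s - \<sigma>) *\<^sub>R \<xi>z \<sigma>" lborel] hist_integrand_measurable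
  by (simp add: hist_def[abs_def] case_prod_beta')

lemma integrable_K0_sq_reflect: "integrable lborel (\<lambda>\<sigma>. (K0 (s - \<sigma>))^2)"
  using lborel_integrable_shift(2)[OF integrable_K0_sq, of s] by simp

lemma norm_hist_le: "norm (hist s) \<le> c_hist"
proof -
  have "norm (hist s) \<le> (\<integral>\<sigma>. ((K0 (s - \<sigma>))^2 + (norm (\<xi>z \<sigma>))^2) / 2 \<partial>lborel)"
    unfolding hist_def
  proof (rule norm_integral_le_integral)
    show "integrable lborel (\<lambda>\<sigma>. ((K0 (s - \<sigma>))^2 + (norm (\<xi>z \<sigma>))^2) / 2)"
      using integrable_K0_sq_reflect integrable_xiz_sq by simp
    show "AE \<sigma> in lborel. norm (K0 (s - \<sigma>) *\<^sub>R \<xi>z \<sigma>) \<le> ((K0 (s - \<sigma>))^2 + (norm (\<xi>z \<sigma>))^2) / 2"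
      using abs_mult_le_half_sum_sq[of "K0 (s - _)" "norm (\<xi>z _)"] by simp
  qed
  also have "\<dots> = ((\<integral>\<sigma>. (K0 (s - \<sigma>))^2 \<partial>lborel) + (\<integral>\<sigma>. (norm (\<xi>z \<sigma>))^2 \<partial>lborel)) / 2"
    using integrable_K0_sq_reflect integrable_xiz_sq by simp
  also have "(\<integral>\<sigma>. (K0 (s - \<sigma>))^2 \<partial>lborel) = (\<integral>s. (K0 s)^2 \<partial>lborel)"
    using lborel_integral_reflect[of "\<lambda>r. (K0 r)^2" s] by simp
  finally show ?thesis by (simp add: c_hist_def)
qed

lemma set_integral_history_eq_hist: assumes s: "s \<in> {\<tau>..T}"
  shows "set_lebesgue_integral lborel {0..\<tau>} (\<lambda>\<sigma>. K (s - \<sigma>) *\<^sub>R \<xi> \<sigma>) = hist s"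
  unfolding set_lebesgue_integral_def hist_def
  by (rule Bochner_Integration.integral_cong) (use s in \<open>auto simp: \<xi>z_def K0_def indicator_def\<close>)

abbreviation "R \<equiv> Rres S K"

definition "forcing s = hist_z s + Bu s"
definition "forcing_bnd s = indicator {\<tau>..T} s * c_hist + nB * norm (uz s)"
definition "free_sol t = S (clamp T (t - \<tau>)) \<xi>0 + conv_from T S \<tau> t forcing"
definition "c_free = cS * norm \<xi>0 + cS * (\<integral>s. forcing_bnd s \<partial>lborel)"
definition "free_sol_z t = indicator {\<tau>..T} t *\<^sub>R free_sol t"
definition "sol_var t = free_sol t - conv_from T R \<tau> t free_sol_z"

lemma hist_z_measurable[measurable]: "hist_z \<in> borel_measurable lborel" unfolding hist_z_def[abs_def] by measurable
lemma norm_hist_z_le: "norm (hist_z s) \<le> indicator {\<tau>..T} s * c_hist"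
  using norm_hist_le[of s] by (simp add: hist_z_def indicator_def)
lemma forcing_measurable[measurable]: "forcing \<in> borel_measurable lborel" unfolding forcing_def[abs_def] by measurable
lemma integrable_forcing_bnd: "integrable lborel forcing_bnd"
  unfolding forcing_bnd_def[abs_def] by (intro Bochner_Integration.integrable_add integrable_indicator_Icc_const integrable_Bu_bnd)
lemma norm_forcing_le: "norm (forcing s) \<le> forcing_bnd s"
  unfolding forcing_def forcing_bnd_def using norm_hist_z_le[of s] norm_Bu_le[of s] norm_triangle_ineq[of "hist_z s" "Bu s"] by linarith

lemma free_sol_measurable[measurable]: "free_sol \<in> borel_measurable lborel"
proof -
  have "(\<lambda>t. S (clamp T (t - \<tau>)) \<xi>0) \<in> borel_measurable lborel" by measurable
  moreover have "(\<lambda>t. conv_from T S \<tau> t forcing) \<in> borel_measurable lborel"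
    by (rule conv_from_measurable[OF op_family_S T_nonneg cS_nonneg forcing_measurable])
  ultimately show ?thesis unfolding free_sol_def[abs_def] by measurable
qed

lemma norm_free_sol_le: "norm (free_sol t) \<le> c_free"
proof -
  have "norm (free_sol t) \<le> norm (S (clamp T (t - \<tau>)) \<xi>0) + norm (conv_from T S \<tau> t forcing)"
    unfolding free_sol_def by (rule norm_triangle_ineq)
  also have "norm (S (clamp T (t - \<tau>)) \<xi>0) \<le> cS * norm \<xi>0" by (rule norm_S_le[OF clamp_in[OF T_nonneg]])
  also have "norm (conv_from T S \<tau> t forcing) \<le> cS * (\<integral>s. forcing_bnd s \<partial>lborel)"
    by (rule norm_conv_from_le[OF op_family_S T_nonneg cS_nonneg integrable_forcing_bnd norm_forcing_le])
  finally show ?thesis by (simp add: c_free_def)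
qed

lemma free_sol_z_measurable[measurable]: "free_sol_z \<in> borel_measurable lborel" unfolding free_sol_z_def[abs_def] by measurable
lemma norm_free_sol_z_le: "norm (free_sol_z t) \<le> indicator {\<tau>..T} t * c_free"
  using norm_free_sol_le[of t] by (simp add: free_sol_z_def indicator_def)
lemma sol_var_measurable[measurable]: "sol_var \<in> borel_measurable lborel"
proof -
  have "(\<lambda>t. conv_from T R \<tau> t free_sol_z) \<in> borel_measurable lborel"
    by (rule conv_from_measurable[OF op_family_Rres T_nonneg cR_nonneg free_sol_z_measurable])
  thus ?thesis unfolding sol_var_def[abs_def] by measurable
qed

definition "c_sol = c_free + cR * (\<integral>t. indicator {\<tau>..T} t * c_free \<partial>lborel)"

lemma norm_sol_var_le: "norm (sol_var t) \<le> c_sol"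
proof -
  have "norm (sol_var t) \<le> norm (free_sol t) + norm (conv_from T R \<tau> t free_sol_z)"
    unfolding sol_var_def by (rule norm_triangle_ineq4)
  also have "norm (conv_from T R \<tau> t free_sol_z) \<le> cR * (\<integral>t. indicator {\<tau>..T} t * c_free \<partial>lborel)"
    by (rule norm_conv_from_le[OF op_family_Rres T_nonneg cR_nonneg integrable_indicator_Icc_const norm_free_sol_z_le])
  finally show ?thesis using norm_free_sol_le[of t] by (simp add: c_sol_def)
qed

lemma Fop_eq_conv_from: assumes t: "t \<in> {\<tau>..T}"
  shows "Fop S R t \<tau> \<xi>0 = S (clamp T (t - \<tau>)) \<xi>0 - conv_from T R \<tau> t (\<lambda>r. indicator {\<tau>..T} r *\<^sub>R S (clamp T (r - \<tau>)) \<xi>0)"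
proof -
  have "set_lebesgue_integral lborel {\<tau>..t} (\<lambda>s. R (t - s) (S (s - \<tau>) \<xi>0)) = conv_from T R \<tau> t (\<lambda>r. indicator {\<tau>..T} r *\<^sub>R S (clamp T (r - \<tau>)) \<xi>0)"
    unfolding set_lebesgue_integral_def conv_from_def
    by (rule Bochner_Integration.integral_cong) (use t tau in \<open>auto simp: indicator_def\<close>)
  thus ?thesis unfolding Fop_def using t tau by auto
qed


lemma integral_Fop_eq_conv_from: assumes t: "t \<in> {\<tau>..T}"
  shows "set_lebesgue_integral lborel {\<tau>..t} (\<lambda>s. Fop S R t s (B (u s)))
       = conv_from T S \<tau> t Bu - conv_from T R \<tau> t (\<lambda>r. indicator {\<tau>..T} r *\<^sub>R conv_from T S \<tau> r Bu)"
proof -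
  define J where
    "J s = (\<integral>r. indicator {s..t} r *\<^sub>R R (clamp T (t - r)) (S (clamp T (r - s)) (Bu s)) \<partial>lborel)" for s
  note assoc = conv_from_assoc[OF op_family_Rres op_family_S cR_nonneg cS_nonneg T_nonneg _ _
      Bu_measurable integrable_Bu_bnd norm_Bu_le, of \<tau> t, folded J_def]
  have "Fop S R t s (B (u s)) = S (clamp T (t - s)) (Bu s) - J s" if s: "s \<in> {\<tau>..t}" for s
  proof -
    have "set_lebesgue_integral lborel {s..t} (\<lambda>r. R (t - r) (S (r - s) (B (u s)))) = J s"
      unfolding set_lebesgue_integral_def J_def
      by (rule Bochner_Integration.integral_cong) (use s t tau in \<open>auto simp: indicator_def Bu_def uz_def\<close>)
    thus ?thesis unfolding Fop_def using s t tau by (auto simp: Bu_def uz_def)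
  qed
  hence "set_lebesgue_integral lborel {\<tau>..t} (\<lambda>s. Fop S R t s (B (u s)))
      = (\<integral>s. indicator {\<tau>..t} s *\<^sub>R S (clamp T (t - s)) (Bu s) - indicator {\<tau>..t} s *\<^sub>R J s \<partial>lborel)"
    unfolding set_lebesgue_integral_def
    by (intro Bochner_Integration.integral_cong) (auto simp: indicator_def scaleR_diff_right)
  also have "\<dots> = conv_from T S \<tau> t Bu - (\<integral>s. indicator {\<tau>..t} s *\<^sub>R J s \<partial>lborel)"
    unfolding conv_from_def
    by (rule Bochner_Integration.integral_diff[OF conv_from_integrand_integrable[OF op_family_S T_nonneg
          cS_nonneg Bu_measurable integrable_Bu_bnd norm_Bu_le] assoc(2)]) (use tau t in auto)
  finally show ?thesis using assoc(1) tau t by simp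
qed

definition "G_clamped s \<sigma> y = mu S K (clamp T (s - \<sigma>)) y - S (clamp T (s - \<tau>)) (mu S K (clamp T (\<tau> - \<sigma>)) y)"
definition "cG = cmu + cS * cmu"

lemma cG_nonneg: "0 \<le> cG" unfolding cG_def using cmu_nonneg cS_nonneg by simp

lemma norm_G_clamped_le: "norm (G_clamped s \<sigma> y) \<le> cG * norm y"
proof -
  have "norm (G_clamped s \<sigma> y) \<le> norm (mu S K (clamp T (s - \<sigma>)) y) + norm (S (clamp T (s - \<tau>)) (mu S K (clamp T (\<tau> - \<sigma>)) y))"
    unfolding G_clamped_def by (rule norm_triangle_ineq4)
  also have "norm (mu S K (clamp T (s - \<sigma>)) y) \<le> cmu * norm y" by (rule norm_mu_le[OF clamp_in[OF T_nonneg]])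
  also have "norm (S (clamp T (s - \<tau>)) (mu S K (clamp T (\<tau> - \<sigma>)) y)) \<le> cS * (cmu * norm y)"
    by (rule order_trans[OF norm_S_le[OF clamp_in[OF T_nonneg]] mult_left_mono[OF norm_mu_le[OF clamp_in[OF T_nonneg]] cS_nonneg]])
  finally show ?thesis by (simp add: cG_def algebra_simps)
qed

lemma G_clamped_measurable[measurable]:
  assumes [measurable]: "a \<in> borel_measurable M" "b \<in> borel_measurable M" "c \<in> borel_measurable M"
  shows "(\<lambda>w. G_clamped (a w) (b w) (c w)) \<in> borel_measurable M"
proof -
  have m1: "(\<lambda>x. mu S K (clamp T (\<tau> - b x)) (c x)) \<in> borel_measurable M" by measurable
  have m2: "(\<lambda>x. S (clamp T (a x - \<tau>)) (mu S K (clamp T (\<tau> - b x)) (c x))) \<in> borel_measurable M"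
    by (rule S_clamp_measurable[OF _ m1]) measurable
  have m3: "(\<lambda>x. mu S K (clamp T (a x - b x)) (c x)) \<in> borel_measurable M" by measurable
  show ?thesis unfolding G_clamped_def using m2 m3 by measurable
qed

lemma integrable_K0_S: "integrable lborel (\<lambda>r. (indicator {c..d} r * K0 (r - \<sigma>)) *\<^sub>R S (clamp T (a - r)) y)"
proof (rule Bochner_Integration.integrable_bound)
  show "integrable lborel (\<lambda>r. \<bar>K0 (r - \<sigma>)\<bar> * (cS * norm y))"
    using lborel_integrable_shift(1)[OF integrable_abs_K0, of \<sigma>] by simp
  show "(\<lambda>r. (indicator {c..d} r * K0 (r - \<sigma>)) *\<^sub>R S (clamp T (a - r)) y) \<in> borel_measurable lborel" by measurable
  show "AE r in lborel. norm ((indicator {c..d} r * K0 (r - \<sigma>)) *\<^sub>R S (clamp T (a - r)) y) \<le> norm (\<bar>K0 (r - \<sigma>)\<bar> * (cS * norm y))"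
  proof (rule AE_I2)
    fix r
    have "indicator {c..d} r * \<bar>K0 (r - \<sigma>)\<bar> * norm (S (clamp T (a - r)) y) \<le> 1 * \<bar>K0 (r - \<sigma>)\<bar> * (cS * norm y)"
      by (intro mult_mono norm_S_le[OF clamp_in[OF T_nonneg]]) (auto simp: indicator_def)
    thus "norm ((indicator {c..d} r * K0 (r - \<sigma>)) *\<^sub>R S (clamp T (a - r)) y) \<le> norm (\<bar>K0 (r - \<sigma>)\<bar> * (cS * norm y))"
      using cS_nonneg by (simp add: abs_mult)
  qed
qed

lemma mu_eq_shifted:
  assumes "\<sigma> \<le> t" "t - \<sigma> \<le> T"
  shows "mu S K (t - \<sigma>) y = (\<integral>r. (indicator {\<sigma>..t} r * K0 (r - \<sigma>)) *\<^sub>R S (clamp T (t - r)) y \<partial>lborel)"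
proof -
  have "mu S K (t - \<sigma>) y = (\<integral>q. (indicator {0..t - \<sigma>} q * K0 q) *\<^sub>R S (clamp T (t - \<sigma> - q)) y \<partial>lborel)"
    using mu_eq_clamped[of "t - \<sigma>" y] assms by simp
  also have "\<dots> = (\<integral>r. (indicator {0..t - \<sigma>} (r - \<sigma>) * K0 (r - \<sigma>)) *\<^sub>R S (clamp T (t - \<sigma> - (r - \<sigma>))) y \<partial>lborel)"
    by (rule lborel_integral_shift)
  also have "\<dots> = (\<integral>r. (indicator {\<sigma>..t} r * K0 (r - \<sigma>)) *\<^sub>R S (clamp T (t - r)) y \<partial>lborel)"
    by (rule Bochner_Integration.integral_cong) (auto simp: indicator_def)
  finally show ?thesis .
qed

lemma S_mu_eq_integral:
  assumes "0 \<le> \<sigma>" "\<sigma> \<le> a" "a \<le> s" "s \<le> T"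
  shows "S (s - a) (mu S K (a - \<sigma>) y) = (\<integral>r. (indicator {\<sigma>..a} r * K0 (r - \<sigma>)) *\<^sub>R S (clamp T (s - r)) y \<partial>lborel)"
proof -
  have lin: "S (s - a) (c *\<^sub>R v) = c *\<^sub>R S (s - a) v" for c v
    using op_family_scaleR[OF op_family_S, of "s - a"] assms by auto
  have zero: "S (s - a) 0 = 0" using lin[of 0 0] by simp
  have "S (s - a) (mu S K (a - \<sigma>) y)
      = (\<integral>r. S (s - a) ((indicator {\<sigma>..a} r * K0 (r - \<sigma>)) *\<^sub>R S (clamp T (a - r)) y) \<partial>lborel)"
    using assms
    by (subst mu_eq_shifted) (auto intro!: integral_bounded_linear[symmetric, OF S_bounded_linear] integrable_K0_S)
  also have "\<dots> = (\<integral>r. (indicator {\<sigma>..a} r * K0 (r - \<sigma>)) *\<^sub>R S (clamp T (s - r)) y \<partial>lborel)"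
  proof (rule Bochner_Integration.integral_cong[OF refl])
    fix r
    show "S (s - a) ((indicator {\<sigma>..a} r * K0 (r - \<sigma>)) *\<^sub>R S (clamp T (a - r)) y)
        = (indicator {\<sigma>..a} r * K0 (r - \<sigma>)) *\<^sub>R S (clamp T (s - r)) y"
      using S_add[of "s - a" "a - r" y] assms by (cases "r \<in> {\<sigma>..a}") (auto simp: lin zero)
  qed
  finally show ?thesis .
qed

(* G(s,sigma,tau) = int_tau^s K(r - sigma) e^{(s-r)A} dr: this is how the kernel M of the solution
   formula reproduces the forcing by the history. *)

lemma G_clamped_eq_integral:
  assumes \<sigma>: "\<sigma> \<in> {0..\<tau>}" and s: "s \<in> {\<tau>..T}"
  shows "(\<integral>r. (indicator {\<tau>..s} r * K0 (r - \<sigma>)) *\<^sub>R S (clamp T (s - r)) y \<partial>lborel) = G_clamped s \<sigma> y"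
proof -
  have "G_clamped s \<sigma> y = mu S K (s - \<sigma>) y - S (s - \<tau>) (mu S K (\<tau> - \<sigma>) y)"
    using \<sigma> s tau by (simp add: G_clamped_def)
  also have "\<dots> = (\<integral>r. (indicator {\<sigma>..s} r * K0 (r - \<sigma>)) *\<^sub>R S (clamp T (s - r)) y \<partial>lborel)
      - (\<integral>r. (indicator {\<sigma>..\<tau>} r * K0 (r - \<sigma>)) *\<^sub>R S (clamp T (s - r)) y \<partial>lborel)"
    using \<sigma> s tau by (simp add: mu_eq_shifted[of \<sigma> s] S_mu_eq_integral[of \<sigma> \<tau> s])
  also have "\<dots> = (\<integral>r. (indicator {\<tau>..s} r * K0 (r - \<sigma>)) *\<^sub>R S (clamp T (s - r)) y \<partial>lborel)"
    using integral_Icc_split[of \<sigma> \<tau> s "\<lambda>r. K0 (r - \<sigma>) *\<^sub>R S (clamp T (s - r)) y"] integrable_K0_S \<sigma> s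
    by simp
  finally show ?thesis ..
qed

lemma integral_G_clamped_eq: assumes s: "s \<in> {\<tau>..T}"
  shows "(\<integral>\<sigma>. indicator {0..\<tau>} \<sigma> *\<^sub>R G_clamped s \<sigma> (\<xi>z \<sigma>) \<partial>lborel) = conv_from T S \<tau> s hist_z"
proof -
  define \<Psi> where "\<Psi> r \<sigma> = indicator {\<tau>..T} r *\<^sub>R (K0 (r - \<sigma>) *\<^sub>R \<xi>z \<sigma>)" for r \<sigma>
  have m\<Psi>: "(\<lambda>z. \<Psi> (fst z) (snd z)) \<in> borel_measurable (lborel \<Otimes>\<^sub>M lborel)"
    unfolding \<Psi>_def by measurable
  have \<Psi>b: "norm (\<Psi> r \<sigma>) \<le> \<bar>K0 (r - \<sigma>)\<bar> * norm (\<xi>z \<sigma>)" for r \<sigma>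
    by (simp add: \<Psi>_def indicator_def)
  have "conv_from T S \<tau> s hist_z = (\<integral>r. indicator {\<tau>..s} r *\<^sub>R S (clamp T (s - r)) (\<integral>\<sigma>. \<Psi> r \<sigma> \<partial>lborel) \<partial>lborel)"
    unfolding conv_from_def hist_z_def hist_def \<Psi>_def by (simp add: scaleR_scaleR[symmetric] del: scaleR_scaleR)
  also have "\<dots> = (\<integral>\<sigma>. \<integral>r. indicator {\<tau>..s} r *\<^sub>R S (clamp T (s - r)) (\<Psi> r \<sigma>) \<partial>lborel \<partial>lborel)"
    by (rule integral_op_Fubini(1)[OF op_family_S T_nonneg cS_nonneg m\<Psi> integrable_abs_K0 integrable_xiz \<Psi>b])
  also have "\<dots> = (\<integral>\<sigma>. indicator {0..\<tau>} \<sigma> *\<^sub>R G_clamped s \<sigma> (\<xi>z \<sigma>) \<partial>lborel)"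
  proof (rule Bochner_Integration.integral_cong[OF refl])
    fix \<sigma>
    show "(\<integral>r. indicator {\<tau>..s} r *\<^sub>R S (clamp T (s - r)) (\<Psi> r \<sigma>) \<partial>lborel) = indicator {0..\<tau>} \<sigma> *\<^sub>R G_clamped s \<sigma> (\<xi>z \<sigma>)"
    proof (cases "\<sigma> \<in> {0..\<tau>}")
      case True
      have "(\<integral>r. indicator {\<tau>..s} r *\<^sub>R S (clamp T (s - r)) (\<Psi> r \<sigma>) \<partial>lborel)
          = (\<integral>r. (indicator {\<tau>..s} r * K0 (r - \<sigma>)) *\<^sub>R S (clamp T (s - r)) (\<xi>z \<sigma>) \<partial>lborel)"
        by (rule Bochner_Integration.integral_cong[OF refl])
           (use s in \<open>auto simp: \<Psi>_def indicator_def op_family_scaleR[OF op_family_S clamp_in[OF T_nonneg]]\<close>)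
      also have "\<dots> = G_clamped s \<sigma> (\<xi>z \<sigma>)" by (rule G_clamped_eq_integral[OF True s])
      finally show ?thesis using True by simp
    next
      case False
      hence "\<xi>z \<sigma> = 0" by (simp add: \<xi>z_def)
      thus ?thesis using False by (simp add: \<Psi>_def op_family_zero[OF op_family_S clamp_in[OF T_nonneg]])
    qed
  qed
  finally show ?thesis ..
qed

lemma Gop_eq_G_clamped: assumes "\<sigma> \<in> {0..\<tau>}" "s \<in> {\<tau>..T}" shows "Gop S K s \<sigma> \<tau> x = G_clamped s \<sigma> x"
proof -
  have "clamp T (s - \<sigma>) = s - \<sigma>" "clamp T (s - \<tau>) = s - \<tau>" "clamp T (\<tau> - \<sigma>) = \<tau> - \<sigma>"
    using assms tau by auto
  thus ?thesis by (simp add: Gop_def G_clamped_def)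
qed

lemma integral_Mop_eq_conv_from: assumes t: "t \<in> {\<tau>..T}"
  shows "set_lebesgue_integral lborel {0..\<tau>} (\<lambda>\<sigma>. Mop S K R t \<sigma> \<tau> (\<xi> \<sigma>))
       = conv_from T S \<tau> t hist_z - conv_from T R \<tau> t (\<lambda>r. indicator {\<tau>..T} r *\<^sub>R conv_from T S \<tau> r hist_z)"
proof -
  define J where "J \<sigma> = (\<integral>s. indicator {\<tau>..t} s *\<^sub>R R (clamp T (t - s)) (G_clamped s \<sigma> (\<xi>z \<sigma>)) \<partial>lborel)" for \<sigma>
  define \<Phi> where "\<Phi> s \<sigma> = (indicator {\<tau>..T} s * indicator {0..\<tau>} \<sigma>) *\<^sub>R G_clamped s \<sigma> (\<xi>z \<sigma>)" for s \<sigma>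
  have \<Phi>_meas: "(\<lambda>z. \<Phi> (fst z) (snd z)) \<in> borel_measurable (lborel \<Otimes>\<^sub>M lborel)"
    unfolding \<Phi>_def by measurable
  have \<Phi>_le: "norm (\<Phi> s \<sigma>) \<le> (indicator {0..T} (s - \<sigma>) * cG) * norm (\<xi>z \<sigma>)" for s \<sigma>
    using norm_G_clamped_le[of s \<sigma> "\<xi>z \<sigma>"] tau cG_nonneg by (auto simp: \<Phi>_def indicator_def)
  have \<Phi>_integral: "(\<integral>\<sigma>. \<Phi> s \<sigma> \<partial>lborel) = indicator {\<tau>..T} s *\<^sub>R conv_from T S \<tau> s hist_z" for s
    by (cases "s \<in> {\<tau>..T}") (simp_all add: \<Phi>_def integral_G_clamped_eq flip: scaleR_scaleR)
  have J_eq: "(\<integral>s. indicator {\<tau>..t} s *\<^sub>R R (clamp T (t - s)) (\<Phi> s \<sigma>) \<partial>lborel) = indicator {0..\<tau>} \<sigma> *\<^sub>R J \<sigma>" for \<sigma>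
    unfolding J_def integral_scaleR_right[symmetric]
    by (rule Bochner_Integration.integral_cong[OF refl])
       (use t in \<open>auto simp: \<Phi>_def indicator_def op_family_scaleR[OF op_family_Rres clamp_in[OF T_nonneg]]\<close>)
  note Fubini = integral_op_Fubini[OF op_family_Rres T_nonneg cR_nonneg \<Phi>_meas integrable_indicator_Icc_const
      integrable_xiz \<Phi>_le, of \<tau> t, unfolded J_eq \<Phi>_integral]
  have G_int: "integrable lborel (\<lambda>\<sigma>. indicator {0..\<tau>} \<sigma> *\<^sub>R G_clamped t \<sigma> (\<xi>z \<sigma>))"
    by (rule Bochner_Integration.integrable_bound[OF integrable_mult_right[OF integrable_xiz, of cG]])
       (use norm_G_clamped_le cG_nonneg in \<open>auto intro!: AE_I2 simp: indicator_def\<close>)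
  have "Mop S K R t \<sigma> \<tau> (\<xi> \<sigma>) = G_clamped t \<sigma> (\<xi>z \<sigma>) - J \<sigma>" if \<sigma>: "\<sigma> \<in> {0..\<tau>}" for \<sigma>
  proof -
    have "set_lebesgue_integral lborel {\<tau>..t} (\<lambda>s. R (t - s) (Gop S K s \<sigma> \<tau> (\<xi> \<sigma>))) = J \<sigma>"
      unfolding set_lebesgue_integral_def J_def
      by (rule Bochner_Integration.integral_cong[OF refl]) (use t \<sigma> tau in \<open>auto simp: indicator_def \<xi>z_def Gop_eq_G_clamped\<close>)
    thus ?thesis unfolding Mop_def using Gop_eq_G_clamped[OF \<sigma> t] \<sigma> by (simp add: \<xi>z_def)
  qed
  hence "set_lebesgue_integral lborel {0..\<tau>} (\<lambda>\<sigma>. Mop S K R t \<sigma> \<tau> (\<xi> \<sigma>))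
      = (\<integral>\<sigma>. indicator {0..\<tau>} \<sigma> *\<^sub>R G_clamped t \<sigma> (\<xi>z \<sigma>) - indicator {0..\<tau>} \<sigma> *\<^sub>R J \<sigma> \<partial>lborel)"
    unfolding set_lebesgue_integral_def
    by (intro Bochner_Integration.integral_cong) (auto simp: indicator_def)
  also have "\<dots> = conv_from T S \<tau> t hist_z - (\<integral>\<sigma>. indicator {0..\<tau>} \<sigma> *\<^sub>R J \<sigma> \<partial>lborel)"
    by (simp add: Bochner_Integration.integral_diff[OF G_int Fubini(2)] integral_G_clamped_eq[OF t])
  finally show ?thesis by (simp add: conv_from_def[of T R \<tau> t] Fubini(1))
qed

lemma conv_from_S_forcing: "conv_from T S \<tau> t forcing = conv_from T S \<tau> t hist_z + conv_from T S \<tau> t Bu"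
  unfolding forcing_def[abs_def]
  by (rule conv_from_add[OF op_family_S T_nonneg cS_nonneg hist_z_measurable integrable_indicator_Icc_const norm_hist_z_le Bu_measurable integrable_Bu_bnd norm_Bu_le])

lemma sol_formula_eq_sol_var: assumes t: "t \<in> {\<tau>..T}"
  shows "sol_formula S K R B \<tau> \<xi>0 \<xi> u t = sol_var t"
proof -
  define g1 where "g1 r = indicator {\<tau>..T} r *\<^sub>R S (clamp T (r - \<tau>)) \<xi>0" for r
  define g2 where "g2 r = indicator {\<tau>..T} r *\<^sub>R conv_from T S \<tau> r hist_z" for r
  define g3 where "g3 r = indicator {\<tau>..T} r *\<^sub>R conv_from T S \<tau> r Bu" for r
  have m1: "g1 \<in> borel_measurable lborel" unfolding g1_def[abs_def] by measurable
  have m2: "g2 \<in> borel_measurable lborel"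
    using conv_from_measurable[OF op_family_S T_nonneg cS_nonneg hist_z_measurable] unfolding g2_def[abs_def] by measurable
  have m3: "g3 \<in> borel_measurable lborel"
    using conv_from_measurable[OF op_family_S T_nonneg cS_nonneg Bu_measurable] unfolding g3_def[abs_def] by measurable
  have b1: "norm (g1 r) \<le> indicator {\<tau>..T} r * (cS * norm \<xi>0)" for r
    using norm_S_le[OF clamp_in[OF T_nonneg]] by (simp add: g1_def indicator_def)
  have b2: "norm (g2 r) \<le> indicator {\<tau>..T} r * (cS * (\<integral>s. indicator {\<tau>..T} s * c_hist \<partial>lborel))" for r
    using norm_conv_from_le[OF op_family_S T_nonneg cS_nonneg integrable_indicator_Icc_const norm_hist_z_le] by (simp add: g2_def indicator_def)
  have b3: "norm (g3 r) \<le> indicator {\<tau>..T} r * (cS * (\<integral>s. nB * norm (uz s) \<partial>lborel))" for r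
    using norm_conv_from_le[OF op_family_S T_nonneg cS_nonneg integrable_Bu_bnd norm_Bu_le] by (simp add: g3_def indicator_def)
  have b12: "norm (g1 r + g2 r) \<le> indicator {\<tau>..T} r * (cS * norm \<xi>0) + indicator {\<tau>..T} r * (cS * (\<integral>s. indicator {\<tau>..T} s * c_hist \<partial>lborel))" for r
    using norm_triangle_ineq[of "g1 r" "g2 r"] b1[of r] b2[of r] by linarith
  have gz_eq: "free_sol_z = (\<lambda>r. (g1 r + g2 r) + g3 r)"
    by (rule ext) (simp add: free_sol_z_def free_sol_def g1_def g2_def g3_def conv_from_S_forcing scaleR_add_right)
  have "conv_from T R \<tau> t free_sol_z = conv_from T R \<tau> t (\<lambda>r. g1 r + g2 r) + conv_from T R \<tau> t g3"
    unfolding gz_eq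
    by (rule conv_from_add[OF op_family_Rres T_nonneg cR_nonneg _ _ b12 m3 integrable_indicator_Icc_const b3])
       (use m1 m2 in \<open>auto intro!: Bochner_Integration.integrable_add integrable_indicator_Icc_const\<close>)
  also have "conv_from T R \<tau> t (\<lambda>r. g1 r + g2 r) = conv_from T R \<tau> t g1 + conv_from T R \<tau> t g2"
    by (rule conv_from_add[OF op_family_Rres T_nonneg cR_nonneg m1 integrable_indicator_Icc_const b1 m2 integrable_indicator_Icc_const b2])
  finally have ocgz: "conv_from T R \<tau> t free_sol_z = conv_from T R \<tau> t g1 + conv_from T R \<tau> t g2 + conv_from T R \<tau> t g3" .
  have "sol_formula S K R B \<tau> \<xi>0 \<xi> u t =
      (S (clamp T (t - \<tau>)) \<xi>0 - conv_from T R \<tau> t g1) + (conv_from T S \<tau> t hist_z - conv_from T R \<tau> t g2) + (conv_from T S \<tau> t Bu - conv_from T R \<tau> t g3)"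
    unfolding sol_formula_def Fop_eq_conv_from[OF t] integral_Mop_eq_conv_from[OF t] integral_Fop_eq_conv_from[OF t] g1_def[abs_def] g2_def[abs_def] g3_def[abs_def] ..
  also have "\<dots> = sol_var t"
    unfolding sol_var_def free_sol_def ocgz conv_from_S_forcing by (simp add: algebra_simps)
  finally show ?thesis .
qed


lemma memory_term_eq_conv_from_mu:
  assumes w0m: "w0 \<in> borel_measurable lborel" and wb: "integrable lborel wb" and w0b: "\<And>s. norm (w0 s) \<le> wb s"
    and weq: "\<And>\<sigma>. \<sigma> \<in> {\<tau>..T} \<Longrightarrow> w \<sigma> = w0 \<sigma>" and t: "t \<in> {\<tau>..T}"
  shows "memory_term w t = conv_from T (mu S K) \<tau> t w0"
proof -
  define \<Phi> where "\<Phi> s \<sigma> = (indicator {\<tau>..T} s * indicator {\<tau>..s} \<sigma> * K0 (s - \<sigma>)) *\<^sub>R w0 \<sigma>" for s \<sigma>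
  have \<Phi>_meas: "(\<lambda>z. \<Phi> (fst z) (snd z)) \<in> borel_measurable (lborel \<Otimes>\<^sub>M lborel)"
    unfolding \<Phi>_def using w0m by measurable
  have \<Phi>_le: "norm (\<Phi> s \<sigma>) \<le> \<bar>K0 (s - \<sigma>)\<bar> * wb \<sigma>" for s \<sigma>
    using w0b[of \<sigma>] order_trans[OF norm_ge_zero w0b[of \<sigma>]]
    by (auto simp: \<Phi>_def indicator_def abs_mult intro: mult_left_mono)
  have "memory_term w t = (\<integral>s. indicator {\<tau>..t} s *\<^sub>R S (clamp T (t - s)) (\<integral>\<sigma>. \<Phi> s \<sigma> \<partial>lborel) \<partial>lborel)"
    unfolding set_lebesgue_integral_def[of _ "{\<tau>..t}"]
  proof (rule Bochner_Integration.integral_cong[OF refl])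
    fix s
    have "s \<in> {\<tau>..t} \<Longrightarrow> set_lebesgue_integral lborel {\<tau>..s} (\<lambda>\<sigma>. K (s - \<sigma>) *\<^sub>R w \<sigma>) = (\<integral>\<sigma>. \<Phi> s \<sigma> \<partial>lborel)"
      unfolding set_lebesgue_integral_def
      by (rule Bochner_Integration.integral_cong[OF refl]) (use t tau in \<open>auto simp: \<Phi>_def indicator_def K0_def weq\<close>)
    thus "indicator {\<tau>..t} s *\<^sub>R S (t - s) (set_lebesgue_integral lborel {\<tau>..s} (\<lambda>\<sigma>. K (s - \<sigma>) *\<^sub>R w \<sigma>))
        = indicator {\<tau>..t} s *\<^sub>R S (clamp T (t - s)) (\<integral>\<sigma>. \<Phi> s \<sigma> \<partial>lborel)"
      using t tau by (cases "s \<in> {\<tau>..t}") auto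
  qed
  also have "\<dots> = (\<integral>\<sigma>. \<integral>s. indicator {\<tau>..t} s *\<^sub>R S (clamp T (t - s)) (\<Phi> s \<sigma>) \<partial>lborel \<partial>lborel)"
    by (rule integral_op_Fubini(1)[OF op_family_S T_nonneg cS_nonneg \<Phi>_meas integrable_abs_K0 wb \<Phi>_le])
  also have "\<dots> = (\<integral>\<sigma>. indicator {\<tau>..t} \<sigma> *\<^sub>R mu S K (clamp T (t - \<sigma>)) (w0 \<sigma>) \<partial>lborel)"
  proof (rule Bochner_Integration.integral_cong[OF refl])
    fix \<sigma>
    have "(\<integral>s. indicator {\<tau>..t} s *\<^sub>R S (clamp T (t - s)) (\<Phi> s \<sigma>) \<partial>lborel)
        = indicator {\<tau>..t} \<sigma> *\<^sub>R (\<integral>s. (indicator {\<sigma>..t} s * K0 (s - \<sigma>)) *\<^sub>R S (clamp T (t - s)) (w0 \<sigma>) \<partial>lborel)"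
      unfolding integral_scaleR_right[symmetric]
      by (rule Bochner_Integration.integral_cong[OF refl])
         (use t in \<open>auto simp: \<Phi>_def indicator_def op_family_scaleR[OF op_family_S clamp_in[OF T_nonneg]]\<close>)
    also have "\<dots> = indicator {\<tau>..t} \<sigma> *\<^sub>R mu S K (clamp T (t - \<sigma>)) (w0 \<sigma>)"
      using mu_eq_shifted[of \<sigma> t "w0 \<sigma>"] t tau by (cases "\<sigma> \<in> {\<tau>..t}") auto
    finally show "(\<integral>s. indicator {\<tau>..t} s *\<^sub>R S (clamp T (t - s)) (\<Phi> s \<sigma>) \<partial>lborel)
        = indicator {\<tau>..t} \<sigma> *\<^sub>R mu S K (clamp T (t - \<sigma>)) (w0 \<sigma>)" .
  qed
  finally show ?thesis unfolding conv_from_def .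
qed

lemma conv_from_mu_conv_from_R: assumes t: "t \<in> {\<tau>..T}"
  shows "conv_from T (mu S K) \<tau> t (\<lambda>\<sigma>. indicator {\<tau>..T} \<sigma> *\<^sub>R conv_from T R \<tau> \<sigma> free_sol_z)
       = (\<integral>r. indicator {\<tau>..t} r *\<^sub>R conv (mu S K) R (t - r) (free_sol_z r) \<partial>lborel)"
proof -
  have "conv_from T (mu S K) \<tau> t (\<lambda>\<sigma>. indicator {\<tau>..T} \<sigma> *\<^sub>R conv_from T R \<tau> \<sigma> free_sol_z)
      = (\<integral>r. indicator {\<tau>..t} r *\<^sub>R (\<integral>\<sigma>. indicator {r..t} \<sigma> *\<^sub>R
           mu S K (clamp T (t - \<sigma>)) (R (clamp T (\<sigma> - r)) (free_sol_z r)) \<partial>lborel) \<partial>lborel)"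
    by (rule conv_from_assoc(1)[OF op_family_mu op_family_Rres cmu_nonneg cR_nonneg T_nonneg _ _
          free_sol_z_measurable integrable_indicator_Icc_const norm_free_sol_z_le]) (use t tau in auto)
  also have "\<dots> = (\<integral>r. indicator {\<tau>..t} r *\<^sub>R conv (mu S K) R (t - r) (free_sol_z r) \<partial>lborel)"
    using t tau
    by (intro Bochner_Integration.integral_cong)
       (auto simp: indicator_def conv_eq_shifted[OF op_family_mu op_family_Rres T_nonneg cmu_nonneg cR_nonneg])
  finally show ?thesis .
qed

abbreviation "sol \<equiv> sol_formula S K R B \<tau> \<xi>0 \<xi> u"

definition "sol_z \<sigma> = indicator {\<tau>..T} \<sigma> *\<^sub>R sol_var \<sigma>"

lemma sol_z_measurable[measurable]: "sol_z \<in> borel_measurable lborel" unfolding sol_z_def[abs_def] by measurable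
lemma norm_sol_z_le: "norm (sol_z \<sigma>) \<le> indicator {\<tau>..T} \<sigma> * c_sol"
  using norm_sol_var_le[of \<sigma>] by (simp add: sol_z_def indicator_def)

lemma memory_term_sol: assumes t: "t \<in> {\<tau>..T}"
  shows "memory_term sol t
       = - conv_from T R \<tau> t free_sol_z"
proof -
  have m2: "(\<lambda>\<sigma>. indicator {\<tau>..T} \<sigma> *\<^sub>R conv_from T R \<tau> \<sigma> free_sol_z) \<in> borel_measurable lborel"
    using conv_from_measurable[OF op_family_Rres T_nonneg cR_nonneg free_sol_z_measurable] by measurable
  have b2: "norm (indicator {\<tau>..T} \<sigma> *\<^sub>R conv_from T R \<tau> \<sigma> free_sol_z) \<le> indicator {\<tau>..T} \<sigma> * (cR * (\<integral>t. indicator {\<tau>..T} t * c_free \<partial>lborel))" for \<sigma>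
    using norm_conv_from_le[OF op_family_Rres T_nonneg cR_nonneg integrable_indicator_Icc_const norm_free_sol_z_le] by (simp add: indicator_def)
  have "memory_term sol t
      = conv_from T (mu S K) \<tau> t sol_z"
    by (rule memory_term_eq_conv_from_mu[OF sol_z_measurable integrable_indicator_Icc_const norm_sol_z_le _ t]) (simp add: sol_z_def sol_formula_eq_sol_var)
  also have "sol_z = (\<lambda>\<sigma>. free_sol_z \<sigma> - indicator {\<tau>..T} \<sigma> *\<^sub>R conv_from T R \<tau> \<sigma> free_sol_z)"
    by (rule ext) (simp add: sol_z_def sol_var_def free_sol_z_def scaleR_diff_right)
  also have "conv_from T (mu S K) \<tau> t (\<lambda>\<sigma>. free_sol_z \<sigma> - indicator {\<tau>..T} \<sigma> *\<^sub>R conv_from T R \<tau> \<sigma> free_sol_z)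
      = conv_from T (mu S K) \<tau> t free_sol_z - conv_from T (mu S K) \<tau> t (\<lambda>\<sigma>. indicator {\<tau>..T} \<sigma> *\<^sub>R conv_from T R \<tau> \<sigma> free_sol_z)"
    by (rule conv_from_diff[OF op_family_mu T_nonneg cmu_nonneg free_sol_z_measurable integrable_indicator_Icc_const norm_free_sol_z_le m2 integrable_indicator_Icc_const b2])
  also have "conv_from T (mu S K) \<tau> t (\<lambda>\<sigma>. indicator {\<tau>..T} \<sigma> *\<^sub>R conv_from T R \<tau> \<sigma> free_sol_z)
      = (\<integral>r. indicator {\<tau>..t} r *\<^sub>R conv (mu S K) R (t - r) (free_sol_z r) \<partial>lborel)"
    by (rule conv_from_mu_conv_from_R[OF t])
  (* Volterra equation: mu * R = R + mu *)
  also have "\<dots> = (\<integral>r. indicator {\<tau>..t} r *\<^sub>R R (clamp T (t - r)) (free_sol_z r) + indicator {\<tau>..t} r *\<^sub>R mu S K (clamp T (t - r)) (free_sol_z r) \<partial>lborel)"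
  proof (rule Bochner_Integration.integral_cong[OF refl])
    fix r
    show "indicator {\<tau>..t} r *\<^sub>R conv (mu S K) R (t - r) (free_sol_z r) =
      indicator {\<tau>..t} r *\<^sub>R R (clamp T (t - r)) (free_sol_z r) + indicator {\<tau>..t} r *\<^sub>R mu S K (clamp T (t - r)) (free_sol_z r)"
    proof (cases "r \<in> {\<tau>..t}")
      case True
      hence tr: "t - r \<in> {0..T}" using t tau by auto
      have "conv (mu S K) R (t - r) (free_sol_z r) = R (t - r) (free_sol_z r) + mu S K (t - r) (free_sol_z r)"
        using Rres_volterra_eq[OF tr, of "free_sol_z r"] by (simp add: algebra_simps)
      thus ?thesis using True tr by (simp add: scaleR_add_right)
    qed simp
  qed
  also have "\<dots> = conv_from T R \<tau> t free_sol_z + conv_from T (mu S K) \<tau> t free_sol_z"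
    unfolding conv_from_def
    by (rule Bochner_Integration.integral_add)
       (rule conv_from_integrand_integrable[OF op_family_Rres T_nonneg cR_nonneg free_sol_z_measurable integrable_indicator_Icc_const norm_free_sol_z_le],
        rule conv_from_integrand_integrable[OF op_family_mu T_nonneg cmu_nonneg free_sol_z_measurable integrable_indicator_Icc_const norm_free_sol_z_le])
  finally show ?thesis by simp
qed

lemma sol_formula_mild_eq: assumes t: "t \<in> {\<tau>..T}"
  shows "sol t = S (t - \<tau>) \<xi>0
          + memory_term sol t
          + set_lebesgue_integral lborel {\<tau>..t}
              (\<lambda>s. S (t - s) (set_lebesgue_integral lborel {0..\<tau>} (\<lambda>\<sigma>. K (s - \<sigma>) *\<^sub>R \<xi> \<sigma>)))
          + set_lebesgue_integral lborel {\<tau>..t} (\<lambda>s. S (t - s) (B (u s)))"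
proof -
  have e1: "conv_from T S \<tau> t hist_z = set_lebesgue_integral lborel {\<tau>..t} (\<lambda>s. S (t - s) (hist s))"
    unfolding conv_from_def set_lebesgue_integral_def
    by (rule Bochner_Integration.integral_cong[OF refl]) (use t tau in \<open>auto simp: hist_z_def indicator_def\<close>)
  also have "\<dots> = set_lebesgue_integral lborel {\<tau>..t}
              (\<lambda>s. S (t - s) (set_lebesgue_integral lborel {0..\<tau>} (\<lambda>\<sigma>. K (s - \<sigma>) *\<^sub>R \<xi> \<sigma>)))"
    by (rule set_lebesgue_integral_cong) (use t in \<open>auto simp: set_integral_history_eq_hist\<close>)
  finally have e1: "conv_from T S \<tau> t hist_z = \<dots>" .
  have e2: "conv_from T S \<tau> t Bu = set_lebesgue_integral lborel {\<tau>..t} (\<lambda>s. S (t - s) (B (u s)))"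
    unfolding conv_from_def set_lebesgue_integral_def
    by (rule Bochner_Integration.integral_cong[OF refl]) (use t tau in \<open>auto simp: Bu_def uz_def indicator_def\<close>)
  have e0: "clamp T (t - \<tau>) = t - \<tau>" using t tau by auto
  have "sol t = sol_var t" by (rule sol_formula_eq_sol_var[OF t])
  also have "\<dots> = free_sol t - conv_from T R \<tau> t free_sol_z" by (simp add: sol_var_def)
  also have "\<dots> = S (t - \<tau>) \<xi>0 + conv_from T S \<tau> t hist_z + conv_from T S \<tau> t Bu - conv_from T R \<tau> t free_sol_z"
    by (simp add: free_sol_def conv_from_S_forcing e0)
  finally show ?thesis unfolding memory_term_sol[OF t] e1 e2 by (simp add: algebra_simps)
qed

lemma integrable_sol_z_sq: "integrable lborel (\<lambda>s. (norm (sol_z s))^2)"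
proof (rule Bochner_Integration.integrable_bound[OF integrable_indicator_Icc_const[of \<tau> T "c_sol^2"]])
  show "AE x in lborel. norm ((norm (sol_z x))^2) \<le> norm (indicator {\<tau>..T} x * c_sol^2)"
  proof (rule AE_I2)
    fix x
    have "(norm (sol_z x))^2 \<le> (indicator {\<tau>..T} x * c_sol)^2" by (rule power_mono[OF norm_sol_z_le]) simp
    thus "norm ((norm (sol_z x))^2) \<le> norm (indicator {\<tau>..T} x * c_sol^2)"
      by (cases "x \<in> {\<tau>..T}") (auto simp: sol_z_def)
  qed
qed measurable

lemma L2_on_sol: "L2_on {\<tau>..T} sol"
proof -
  have "(\<lambda>x. indicator {\<tau>..T} x *\<^sub>R sol x) = sol_z"
    by (rule ext) (auto simp: sol_z_def indicator_def sol_formula_eq_sol_var)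
  moreover have "(\<lambda>x. indicator {\<tau>..T} x *\<^sub>R (norm (sol x))^2) = (\<lambda>x. (norm (sol_z x))^2)"
    by (rule ext) (auto simp: sol_z_def indicator_def sol_formula_eq_sol_var)
  ultimately show ?thesis
    unfolding L2_on_def set_borel_measurable_def set_integrable_def
    using sol_z_measurable integrable_sol_z_sq by simp
qed

lemma mild_solution_sol: "mild_solution S K B \<tau> T \<xi>0 \<xi> u sol"
  unfolding mild_solution_def using L2_on_sol sol_formula_mild_eq by (auto intro!: AE_I2)

section \<open>Uniqueness of mild solutions\<close>

definition "memory z s = (\<integral>\<sigma>. (indicator {\<tau>..s} \<sigma> * K0 (s - \<sigma>)) *\<^sub>R z \<sigma> \<partial>lborel)"
definition "memory_z z s = indicator {\<tau>..T} s *\<^sub>R memory z s"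
definition "memory_bnd z = ((\<integral>s. (K0 s)^2 \<partial>lborel) + (\<integral>s. (norm (z s))^2 \<partial>lborel)) / 2"

context
  fixes z :: "real \<Rightarrow> 'h"
  assumes z_meas[measurable]: "z \<in> borel_measurable lborel" and z_sq: "integrable lborel (\<lambda>s. (norm (z s))^2)"
begin

lemma norm_z_measurable: "(\<lambda>\<sigma>. norm (z \<sigma>)) \<in> borel_measurable borel"
  using z_meas by simp

lemma integrable_abs_conv_norm: "integrable lborel (\<lambda>\<sigma>. indicator {\<tau>..s} \<sigma> * \<bar>K0 (s - \<sigma>)\<bar> * norm (z \<sigma>))"
  using integrable_abs_conv[OF K0_measurable integrable_K0_sq norm_z_measurable z_sq] by simp

lemma abs_conv_norm_le: "(\<integral>\<sigma>. indicator {\<tau>..s} \<sigma> * \<bar>K0 (s - \<sigma>)\<bar> * norm (z \<sigma>) \<partial>lborel) \<le> memory_bnd z"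
  using abs_conv_le[OF K0_measurable integrable_K0_sq norm_z_measurable z_sq, of \<tau> s]
  by (simp add: memory_bnd_def)

lemma abs_conv_norm_measurable:
  "(\<lambda>s. \<integral>\<sigma>. indicator {\<tau>..s} \<sigma> * \<bar>K0 (s - \<sigma>)\<bar> * norm (z \<sigma>) \<partial>lborel) \<in> borel_measurable lborel"
  using abs_conv_measurable[OF K0_measurable integrable_K0_sq norm_z_measurable z_sq, of \<tau>] by simp

lemma memory_integrand_integrable: "integrable lborel (\<lambda>\<sigma>. (indicator {\<tau>..s} \<sigma> * K0 (s - \<sigma>)) *\<^sub>R z \<sigma>)"
  by (rule Bochner_Integration.integrable_bound[OF integrable_abs_conv_norm[of s]])
     (auto intro!: AE_I2 simp: abs_mult)

lemma norm_memory_le_abs: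
  "norm (memory z s) \<le> (\<integral>\<sigma>. indicator {\<tau>..s} \<sigma> * \<bar>K0 (s - \<sigma>)\<bar> * norm (z \<sigma>) \<partial>lborel)"
  unfolding memory_def
  by (rule norm_integral_le_integral[OF integrable_abs_conv_norm]) (auto intro!: AE_I2 simp: abs_mult)

lemma memory_measurable[measurable]: "memory z \<in> borel_measurable lborel"
proof -
  have "(\<lambda>w. (indicator {\<tau>..fst w} (snd w) * K0 (fst w - snd w)) *\<^sub>R z (snd w)) \<in> borel_measurable (lborel \<Otimes>\<^sub>M lborel)"
    by measurable
  thus ?thesis
    using lborel.borel_measurable_lebesgue_integral[of "\<lambda>s \<sigma>. (indicator {\<tau>..s} \<sigma> * K0 (s - \<sigma>)) *\<^sub>R z \<sigma>" lborel]
    by (simp add: memory_def[abs_def] case_prod_beta')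
qed

lemma memory_z_measurable[measurable]: "memory_z z \<in> borel_measurable lborel"
  unfolding memory_z_def[abs_def] by measurable

lemma norm_memory_z_le: "norm (memory_z z s) \<le> indicator {\<tau>..T} s * memory_bnd z"
  using order_trans[OF norm_memory_le_abs abs_conv_norm_le] by (simp add: memory_z_def indicator_def)

lemma memory_term_eq_conv_from:
  assumes weq: "\<And>\<sigma>. \<sigma> \<in> {\<tau>..T} \<Longrightarrow> w \<sigma> = z \<sigma>" and t: "t \<in> {\<tau>..T}"
  shows "memory_term w t
       = conv_from T S \<tau> t (memory_z z)"
  unfolding conv_from_def set_lebesgue_integral_def[of _ "{\<tau>..t}"]
proof (rule Bochner_Integration.integral_cong[OF refl])
  fix s
  show "indicator {\<tau>..t} s *\<^sub>R S (t - s) (set_lebesgue_integral lborel {\<tau>..s} (\<lambda>\<sigma>. K (s - \<sigma>) *\<^sub>R w \<sigma>)) =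
        indicator {\<tau>..t} s *\<^sub>R S (clamp T (t - s)) (memory_z z s)"
  proof (cases "s \<in> {\<tau>..t}")
    case True
    have "set_lebesgue_integral lborel {\<tau>..s} (\<lambda>\<sigma>. K (s - \<sigma>) *\<^sub>R w \<sigma>) = memory z s"
      unfolding set_lebesgue_integral_def memory_def
      by (rule Bochner_Integration.integral_cong[OF refl]) (use True t tau in \<open>auto simp: indicator_def K0_def weq\<close>)
    thus ?thesis using True t tau by (simp add: memory_z_def)
  qed simp
qed

lemma norm_conv_from_S_memory_le:
  assumes t: "t \<in> {\<tau>..T}"
  shows "norm (conv_from T S \<tau> t (memory_z z))
    \<le> cS * (\<integral>s. indicator {\<tau>..t} s * (\<integral>\<sigma>. indicator {\<tau>..s} \<sigma> * \<bar>K0 (s - \<sigma>)\<bar> * norm (z \<sigma>) \<partial>lborel) \<partial>lborel)"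
proof -
  let ?\<psi> = "\<lambda>s. \<integral>\<sigma>. indicator {\<tau>..s} \<sigma> * \<bar>K0 (s - \<sigma>)\<bar> * norm (z \<sigma>) \<partial>lborel"
  have \<psi>_nonneg: "0 \<le> ?\<psi> s" for s by (rule integral_nonneg_AE) auto
  have "integrable lborel (\<lambda>s. indicator {\<tau>..t} s * ?\<psi> s)"
  proof (rule Bochner_Integration.integrable_bound[OF integrable_indicator_Icc_const[of \<tau> t "memory_bnd z"]])
    show "(\<lambda>s. indicator {\<tau>..t} s * ?\<psi> s) \<in> borel_measurable lborel"
      using abs_conv_norm_measurable by measurable
    show "AE s in lborel. norm (indicator {\<tau>..t} s * ?\<psi> s) \<le> norm (indicator {\<tau>..t} s * memory_bnd z)"
      using \<psi>_nonneg abs_conv_norm_le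
      by (intro AE_I2) (auto simp: indicator_def intro: order_trans[OF _ abs_ge_self])
  qed
  hence "norm (conv_from T S \<tau> t (memory_z z)) \<le> (\<integral>s. cS * (indicator {\<tau>..t} s * ?\<psi> s) \<partial>lborel)"
    unfolding conv_from_def
  proof (intro norm_integral_le_integral integrable_mult_right AE_I2)
    fix s
    have "norm (S (clamp T (t - s)) (memory_z z s)) \<le> cS * norm (memory_z z s)"
      by (rule norm_S_le[OF clamp_in[OF T_nonneg]])
    also have "\<dots> \<le> cS * norm (memory z s)"
      using cS_nonneg by (intro mult_left_mono) (simp_all add: memory_z_def indicator_def)
    also have "\<dots> \<le> cS * ?\<psi> s" by (rule mult_left_mono[OF norm_memory_le_abs cS_nonneg])
    finally show "norm (indicator {\<tau>..t} s *\<^sub>R S (clamp T (t - s)) (memory_z z s)) \<le> cS * (indicator {\<tau>..t} s * ?\<psi> s)"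
      by (simp add: indicator_def)
  qed
  thus ?thesis by simp
qed

end

lemma memory_diff:
  fixes z1 z2 :: "real \<Rightarrow> 'h"
  assumes "z1 \<in> borel_measurable lborel" "integrable lborel (\<lambda>s. (norm (z1 s))^2)"
    "z2 \<in> borel_measurable lborel" "integrable lborel (\<lambda>s. (norm (z2 s))^2)"
  shows "memory_z z1 s - memory_z z2 s = memory_z (\<lambda>\<sigma>. z1 \<sigma> - z2 \<sigma>) s"
  unfolding memory_z_def memory_def scaleR_diff_right[symmetric]
  by (subst Bochner_Integration.integral_diff[symmetric,
        OF memory_integrand_integrable[OF assms(1,2)] memory_integrand_integrable[OF assms(3,4)]])
     (simp add: scaleR_diff_right)

lemma mild_solution_diff_eq:
  assumes W: "mild_solution S K B \<tau> T \<xi>0 \<xi> u w"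
    and v: "\<And>s. v s = indicator {\<tau>..T} s *\<^sub>R w s - sol_z s"
  shows "AE t in lborel. t \<in> {\<tau>..T} \<longrightarrow> v t = conv_from T S \<tau> t (memory_z v)"
proof -
  define wz where "wz s = indicator {\<tau>..T} s *\<^sub>R w s" for s
  have wL2: "L2_on {\<tau>..T} w" using W by (simp add: mild_solution_def)
  have wz_meas[measurable]: "wz \<in> borel_measurable lborel"
    using L2_on_indicator(1)[OF wL2] by (simp add: wz_def[abs_def])
  have wz_sq: "integrable lborel (\<lambda>s. (norm (wz s))^2)"
    using L2_on_indicator(2)[OF wL2] by (simp add: wz_def[abs_def])
  have v_eq: "v = (\<lambda>s. wz s - sol_z s)" by (simp add: fun_eq_iff v wz_def)
  have memory_v: "conv_from T S \<tau> t (memory_z wz) - conv_from T S \<tau> t (memory_z sol_z)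
      = conv_from T S \<tau> t (memory_z v)" for t
    unfolding v_eq memory_diff[OF wz_meas wz_sq sol_z_measurable integrable_sol_z_sq, symmetric]
    by (rule conv_from_diff[symmetric, OF op_family_S T_nonneg cS_nonneg
          memory_z_measurable[OF wz_meas wz_sq] integrable_indicator_Icc_const norm_memory_z_le[OF wz_meas wz_sq]
          memory_z_measurable[OF sol_z_measurable integrable_sol_z_sq] integrable_indicator_Icc_const
          norm_memory_z_le[OF sol_z_measurable integrable_sol_z_sq]])
  have "AE t in lborel. t \<in> {\<tau>..T} \<longrightarrow> w t = S (t - \<tau>) \<xi>0
      + memory_term w t
      + set_lebesgue_integral lborel {\<tau>..t} (\<lambda>s. S (t - s) (set_lebesgue_integral lborel {0..\<tau>} (\<lambda>\<sigma>. K (s - \<sigma>) *\<^sub>R \<xi> \<sigma>)))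
      + set_lebesgue_integral lborel {\<tau>..t} (\<lambda>s. S (t - s) (B (u s)))"
    using W by (simp add: mild_solution_def)
  thus ?thesis
  proof eventually_elim
    case (elim t)
    show ?case
    proof
      assume t: "t \<in> {\<tau>..T}"
      have "memory_term w t = conv_from T S \<tau> t (memory_z wz)"
        by (rule memory_term_eq_conv_from[OF wz_meas wz_sq _ t]) (simp add: wz_def)
      moreover have "memory_term sol t = conv_from T S \<tau> t (memory_z sol_z)"
        by (rule memory_term_eq_conv_from[OF sol_z_measurable integrable_sol_z_sq _ t])
           (simp add: sol_z_def sol_formula_eq_sol_var)
      moreover have "v t = w t - sol t" using t by (simp add: v sol_z_def sol_formula_eq_sol_var)
      ultimately have "v t = conv_from T S \<tau> t (memory_z wz) - conv_from T S \<tau> t (memory_z sol_z)"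
        using elim t sol_formula_mild_eq[OF t] by simp
      thus "v t = conv_from T S \<tau> t (memory_z v)" using memory_v by simp
    qed
  qed
qed

lemma mild_solution_unique:
  assumes W: "mild_solution S K B \<tau> T \<xi>0 \<xi> u w"
  shows "AE t in lborel. t \<in> {\<tau>..T} \<longrightarrow> w t = sol t"
proof -
  define v where "v s = indicator {\<tau>..T} s *\<^sub>R w s - sol_z s" for s
  have wL2: "L2_on {\<tau>..T} w" using W by (simp add: mild_solution_def)
  have v_meas[measurable]: "v \<in> borel_measurable lborel"
    using L2_on_indicator(1)[OF wL2] unfolding v_def[abs_def] by measurable
  have v_sq: "integrable lborel (\<lambda>s. (norm (v s))^2)"
    unfolding v_def
    by (rule integrable_norm_diff_sq[OF L2_on_indicator(1)[OF wL2] sol_z_measurable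
          L2_on_indicator(2)[OF wL2] integrable_sol_z_sq])
  have norm_v_meas: "(\<lambda>t. norm (v t)) \<in> borel_measurable borel" using v_meas by simp
  have "AE t in lborel. t \<in> {\<tau>..T} \<longrightarrow> norm (v t) = 0"
  proof (rule gronwall_double_AE_zero[OF integrable_K0 integrable_K0_sq norm_v_meas _ _ cS_nonneg])
    show "AE t in lborel. t \<in> {\<tau>..T} \<longrightarrow> norm (v t) \<le> cS *
        (\<integral>s. indicator {\<tau>..t} s * (\<integral>\<sigma>. indicator {\<tau>..s} \<sigma> * \<bar>K0 (s - \<sigma>)\<bar> * norm (v \<sigma>) \<partial>lborel) \<partial>lborel)"
      using mild_solution_diff_eq[OF W v_def]
    proof eventually_elim
      case (elim t)
      thus ?case using norm_conv_from_S_memory_le[OF v_meas v_sq, of t] by auto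
    qed
    show "(\<integral>\<sigma>. indicator {\<tau>..s} \<sigma> * \<bar>K0 (s - \<sigma>)\<bar> * norm (v \<sigma>) \<partial>lborel) \<le> memory_bnd v" for s
      by (rule abs_conv_norm_le[OF v_meas v_sq])
  qed (use v_sq tau in auto)
  thus ?thesis by eventually_elim (auto simp: v_def sol_z_def sol_formula_eq_sol_var)
qed

end

theorem proposition2p3:
  fixes S :: "real \<Rightarrow> 'h::{real_inner,banach,second_countable_topology} \<Rightarrow> 'h"
    and A :: "'h \<Rightarrow> 'h" and D :: "'h set"
    and C \<omega> T \<tau> :: real
    and K :: "real \<Rightarrow> real"
    and B :: "'u::{real_inner,banach,second_countable_topology} \<Rightarrow> 'h"
    and \<xi>0 :: 'h and \<xi> :: "real \<Rightarrow> 'h" and u :: "real \<Rightarrow> 'u"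
  assumes "T > 0"
    and "C0_semigroup S"
    and "is_generator S D A"
    and "\<forall>t\<ge>0. \<forall>x. norm (S t x) \<le> C * exp (\<omega> * t) * norm x"
    and "L2_on {0..T} K"
    and "bounded_linear B"
    and "\<tau> \<in> {0<..<T}"
    and "L2_on {0..\<tau>} \<xi>"
    and "L2_on {\<tau>..T} u"
  shows "(\<forall>t\<in>{0..T}. \<forall>x. summable (\<lambda>n. mu_pow S K n t x))
       \<and> volterra_sol S K T (Rres S K)
       \<and> (\<forall>R'. volterra_sol S K T R' \<longrightarrow> (\<forall>t\<in>{0..T}. R' t = Rres S K t))
       \<and> mild_solution S K B \<tau> T \<xi>0 \<xi> u (sol_formula S K (Rres S K) B \<tau> \<xi>0 \<xi> u)
       \<and> (\<forall>w. mild_solution S K B \<tau> T \<xi>0 \<xi> u w \<longrightarrow>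
            (AE t in lborel. t \<in> {\<tau>..T} \<longrightarrow> w t = sol_formula S K (Rres S K) B \<tau> \<xi>0 \<xi> u t))"
proof -
  interpret mild_problem S K T C \<omega> \<tau> \<xi> u B \<xi>0
    by (intro mild_problem.intro kernel_semigroup.intro mild_problem_axioms.intro) (use assms in auto)
  show ?thesis
  proof (intro conjI)
    show "\<forall>t\<in>{0..T}. \<forall>x. summable (\<lambda>n. mu_pow S K n t x)"
      using summable_mu_pow by blast
    show "volterra_sol S K T (Rres S K)" by (rule Rres_volterra_sol)
    show "\<forall>R'. volterra_sol S K T R' \<longrightarrow> (\<forall>t\<in>{0..T}. R' t = Rres S K t)"
      using volterra_sol_unique by blast
    show "mild_solution S K B \<tau> T \<xi>0 \<xi> u (sol_formula S K (Rres S K) B \<tau> \<xi>0 \<xi> u)"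
      by (rule mild_solution_sol)
    show "\<forall>w. mild_solution S K B \<tau> T \<xi>0 \<xi> u w \<longrightarrow>
            (AE t in lborel. t \<in> {\<tau>..T} \<longrightarrow> w t = sol_formula S K (Rres S K) B \<tau> \<xi>0 \<xi> u t)"
      using mild_solution_unique by blast
  qed
qed

end
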